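(* Let $n\ge 0$, let $T$ be a triangulation of a regular polygon with $n+3$ vertices and let $\Theta:\mathcal{C}_T\to\operatorname{Mod}{Q}_T$ be the functor described in the context. Then $\Theta$ is fully faithful.
   Context: Diagonals of the polygon are called roots. Those in $T$ are negative roots, indexed by a set $I$, the one indexed by $i$ being written $-\alpha_i$; the others are positive roots. If $-\alpha_i,-\alpha_j$ bound a common triangle of $T$ with common vertex $x$, set $-\alpha_i<-\alpha_j$ if the minimal-angle rotation around $x$ sending the line through $-\alpha_i$ to that through $-\alpha_j$ is counterclockwise. ${Q}_T$ is the quiver with vertex set $I$ and an arrow $j\to i$ whenever $-\alpha_i,-\alpha_j$ bound a common triangle and $-\alpha_i<-\alpha_j$; $\operatorname{Mod}{Q}_T$ is the category of finite-dimensional complex representations of ${Q}_T$ in which the composition of any two successive arrows in a triangle of ${Q}_T$ is zero. $\operatorname{Supp}\alpha$ is the set of $i\in I$ with $-\alpha_i$ crossing $\alpha$. A pivoting elementary move $P_v$ (pivot $v$) sends a positive root $[v,w]$ to the positive root $[v,w+1]$, vertices being labelled cyclically counterclockwise (equivalently: the two diagonals share $v$, their other endpoints form a border edge, and the rotation about $v$ is counterclockwise). $\mathcal{C}_T$ is the $\mathbb{C}$-linear additive category with objects direct sums of positive roots and $\operatorname{Hom}(\alpha,\alpha')$ the span of pivoting paths from $\alpha$ to $\alpha'$ modulo mesh relations: any two ways of going from a diagonal to another by two consecutive pivoting moves with distinct pivots are equal, except that a composite whose intermediate diagonal is a border edge or a negative root is replaced by zero; paths differing by such a change in two consecutive moves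 are identified. $\Theta$ is the $\mathbb{C}$-linear additive functor sending a positive root $\alpha$ to the representation with $\mathbb{C}$ at vertices of $\operatorname{Supp}\alpha$, $0$ elsewhere, and identity maps along arrows between vertices of $\operatorname{Supp}\alpha$ (zero otherwise), and sending a pivoting move $\alpha\to\alpha'$ to the morphism with component $\mathrm{id}_{\mathbb{C}}$ at each $i\in\operatorname{Supp}\alpha\cap\operatorname{Supp}\alpha'$ and $0$ elsewhere. *)

theory Defs
  imports Complex_Main
begin

text \<open>Polygon with N vertices labelled 0..N-1 cyclically counterclockwise.
  Diagonals/edges are 2-element vertex sets.\<close>

definition cdist :: "nat \<Rightarrow> nat \<Rightarrow> nat \<Rightarrow> nat" where
  "cdist N a c = (c + N - a) mod N"

definition in_arc :: "nat \<Rightarrow> nat \<Rightarrow> nat \<Rightarrow> nat \<Rightarrow> bool" where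
  "in_arc N a b c \<longleftrightarrow> 0 < cdist N a c \<and> cdist N a c < cdist N a b"

definition border_edge :: "nat \<Rightarrow> nat set \<Rightarrow> bool" where
  "border_edge N e \<longleftrightarrow> (\<exists>a<N. e = {a, (a + 1) mod N})"

definition diagonal :: "nat \<Rightarrow> nat set \<Rightarrow> bool" where
  "diagonal N d \<longleftrightarrow> (\<exists>a b. a < N \<and> b < N \<and> a \<noteq> b \<and> d = {a, b}) \<and> \<not> border_edge N d"

definition crosses :: "nat \<Rightarrow> nat set \<Rightarrow> nat set \<Rightarrow> bool" where
  "crosses N d e \<longleftrightarrow> (\<exists>a b c c'. d = {a, b} \<and> e = {c, c'} \<and> in_arc N a b c \<and> in_arc N b a c')"

definition triangulation :: "nat \<Rightarrow> nat set set \<Rightarrow> bool" where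
  "triangulation N T \<longleftrightarrow> T \<subseteq> {d. diagonal N d}
     \<and> (\<forall>d\<in>T. \<forall>e\<in>T. \<not> crosses N d e)
     \<and> (\<forall>d. diagonal N d \<and> d \<notin> T \<longrightarrow> (\<exists>e\<in>T. crosses N d e))"

definition pos_root :: "nat \<Rightarrow> nat set set \<Rightarrow> nat set \<Rightarrow> bool" where
  "pos_root N T d \<longleftrightarrow> diagonal N d \<and> d \<notin> T"

definition supp :: "nat \<Rightarrow> nat set set \<Rightarrow> nat set \<Rightarrow> nat set set" where
  "supp N T \<alpha> = {i\<in>T. crosses N i \<alpha>}"

definition pivot_move :: "nat \<Rightarrow> nat set \<Rightarrow> nat set \<Rightarrow> bool" where
  "pivot_move N \<beta> \<gamma> \<longleftrightarrow> (\<exists>v w. \<beta> = {v, w} \<and> \<gamma> = {v, (w + 1) mod N})"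

text \<open>pivoting paths in C_T: nonempty sequences of positive roots related by moves
  (a one-element list is the identity path)\<close>
definition piv_path :: "nat \<Rightarrow> nat set set \<Rightarrow> nat set list \<Rightarrow> bool" where
  "piv_path N T ps \<longleftrightarrow> ps \<noteq> [] \<and> (\<forall>d\<in>set ps. pos_root N T d)
     \<and> (\<forall>k. Suc k < length ps \<longrightarrow> pivot_move N (ps ! k) (ps ! Suc k))"

text \<open>arrow j -> i of Q_T: i, j bound a common triangle with common vertex x
  (i = {x,p}, j = {x,q}, third side {p,q} in T or a border edge), and -alpha_i < -alpha_j,
  i.e. rotating i counterclockwise about x reaches j (q is counterclockwise after p seen from x).\<close>
definition arrow :: "nat \<Rightarrow> nat set set \<Rightarrow> nat set \<Rightarrow> nat set \<Rightarrow> bool" where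
  "arrow N T j i \<longleftrightarrow> i \<in> T \<and> j \<in> T \<and>
     (\<exists>x p q. i = {x, p} \<and> j = {x, q} \<and> p \<noteq> q \<and> ({p, q} \<in> T \<or> border_edge N {p, q})
        \<and> cdist N x p < cdist N x q)"

text \<open>Matrices as entry functions; representations as (dimension vector, arrow maps).
  The matrix attached to arrow j -> i is  mp j i  of size dim i x dim j.\<close>
type_synonym cmat = "nat \<Rightarrow> nat \<Rightarrow> complex"
type_synonym rep = "(nat set \<Rightarrow> nat) \<times> (nat set \<Rightarrow> nat set \<Rightarrow> cmat)"

definition mmul :: "cmat \<Rightarrow> cmat \<Rightarrow> nat \<Rightarrow> cmat" where
  "mmul A B k = (\<lambda>r c. \<Sum>l<k. A r l * B l c)"

definition rep_hom :: "nat \<Rightarrow> nat set set \<Rightarrow> rep \<Rightarrow> rep \<Rightarrow> (nat set \<Rightarrow> cmat) set" where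
  "rep_hom N T V W = {f.
     (\<forall>i. i \<notin> T \<longrightarrow> f i = (\<lambda>r c. 0))
   \<and> (\<forall>i r c. (fst W i \<le> r \<or> fst V i \<le> c) \<longrightarrow> f i r c = 0)
   \<and> (\<forall>i j. arrow N T j i \<longrightarrow>
        mmul (snd W j i) (f j) (fst W j) = mmul (f i) (snd V j i) (fst V i))}"

definition Theta_obj :: "nat \<Rightarrow> nat set set \<Rightarrow> nat set \<Rightarrow> rep" where
  "Theta_obj N T \<alpha> =
     ((\<lambda>i. if i \<in> supp N T \<alpha> then 1 else 0),
      (\<lambda>j i r c. if j \<in> supp N T \<alpha> \<and> i \<in> supp N T \<alpha> \<and> r = 0 \<and> c = 0 then 1 else 0))"

definition Theta_move :: "nat \<Rightarrow> nat set set \<Rightarrow> nat set \<Rightarrow> nat set \<Rightarrow> nat set \<Rightarrow> cmat" where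
  "Theta_move N T \<beta> \<gamma> = (\<lambda>i r c. if i \<in> supp N T \<beta> \<and> i \<in> supp N T \<gamma> \<and> r = 0 \<and> c = 0 then 1 else 0)"

definition Theta_id :: "nat \<Rightarrow> nat set set \<Rightarrow> nat set \<Rightarrow> nat set \<Rightarrow> cmat" where
  "Theta_id N T \<beta> = (\<lambda>i r c. if i \<in> supp N T \<beta> \<and> r = 0 \<and> c = 0 then 1 else 0)"

fun Theta_path :: "nat \<Rightarrow> nat set set \<Rightarrow> nat set list \<Rightarrow> nat set \<Rightarrow> cmat" where
  "Theta_path N T [] = (\<lambda>i r c. 0)"
| "Theta_path N T [\<beta>] = Theta_id N T \<beta>"
| "Theta_path N T (\<beta> # \<gamma> # rest) =
     (\<lambda>i. mmul (Theta_path N T (\<gamma> # rest) i) (Theta_move N T \<beta> \<gamma> i) (fst (Theta_obj N T \<gamma>) i))"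

text \<open>Free vector space on pivoting paths from alpha to alpha' (finitely supported coefficients)\<close>
definition free_hom :: "nat \<Rightarrow> nat set set \<Rightarrow> nat set \<Rightarrow> nat set \<Rightarrow> (nat set list \<Rightarrow> complex) set" where
  "free_hom N T \<alpha> \<alpha>' = {c. finite {p. c p \<noteq> 0} \<and>
     (\<forall>p. c p \<noteq> 0 \<longrightarrow> piv_path N T p \<and> hd p = \<alpha> \<and> last p = \<alpha>')}"

definition Theta_lin :: "nat \<Rightarrow> nat set set \<Rightarrow> (nat set list \<Rightarrow> complex) \<Rightarrow> nat set \<Rightarrow> cmat" where
  "Theta_lin N T c = (\<lambda>i r s. \<Sum>p\<in>{p. c p \<noteq> 0}. c p * Theta_path N T p i r s)"

text \<open>Mesh relations: for beta = {a,b}, the two two-step paths with distinct pivots to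
  delta = {a+1,b+1} pass through {a,b+1} and {a+1,b}. They are identified; if the second
  intermediate is a border edge or a negative root, the first composite is zero.\<close>
definition mesh_gens :: "nat \<Rightarrow> nat set set \<Rightarrow> nat set \<Rightarrow> nat set \<Rightarrow> (nat set list \<Rightarrow> complex) set" where
  "mesh_gens N T \<alpha> \<alpha>' = {g. \<exists>p q a b.
     (let \<beta> = {a, b}; \<gamma>1 = {a, (b + 1) mod N}; \<gamma>2 = {(a + 1) mod N, b};
          \<delta> = {(a + 1) mod N, (b + 1) mod N};
          w1 = p @ [\<beta>, \<gamma>1, \<delta>] @ q; w2 = p @ [\<beta>, \<gamma>2, \<delta>] @ q
      in piv_path N T w1 \<and> hd w1 = \<alpha> \<and> last w1 = \<alpha>' \<and>
         (if pos_root N T \<gamma>2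
          then g = (\<lambda>w. (if w = w1 then 1 else 0) - (if w = w2 then 1 else 0))
          else (border_edge N \<gamma>2 \<or> \<gamma>2 \<in> T) \<and> g = (\<lambda>w. if w = w1 then 1 else 0)))}"

definition mesh_span :: "nat \<Rightarrow> nat set set \<Rightarrow> nat set \<Rightarrow> nat set \<Rightarrow> (nat set list \<Rightarrow> complex) set" where
  "mesh_span N T \<alpha> \<alpha>' = {g. \<exists>S co. finite S \<and> S \<subseteq> mesh_gens N T \<alpha> \<alpha>' \<and>
     g = (\<lambda>w. \<Sum>h\<in>S. co h * h w)}"

end

theory Submission
  imports Defs "HOL-Library.Function_Algebras" "HOL-Library.Multiset"
begin

(*
  The proof works in lattice coordinates. The diagonal {x mod N, y mod N} is lifted to a point (x, y)
  with 2 <= y - x <= N - 2, and a pivoting move adds 1 to one coordinate, so pivoting paths from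
  alpha are monotone lattice walks and the mesh relations are the unit squares of the lattice.

  Faithfulness: a walk whose bounding box contains a lift of a negative root or of a border edge is
  killed by mesh relations, and the walks with a positive bounding box all end at the same lift of
  alpha' and agree modulo mesh relations. A single T-diagonal crosses every diagonal of a positive
  box, so Theta does not vanish on such a walk, and an element of the kernel of Theta lies in the
  span of the mesh relations.

  Fullness: the T-diagonals crossing alpha form a zigzag in which consecutive members are joined by
  an arrow of Q_T, so a morphism f from Theta alpha to Theta alpha' is constant on the T-diagonals
  crossing both roots. At the ends of this common stretch, an arrow to a diagonal outside one of the
  supports forces f to vanish unless the lift of alpha' lies weakly above and to the right of that
  of alpha, and then f is a multiple of Theta of any walk from alpha to alpha'.
*)

section \<open>Lattice coordinates for diagonals\<close>

(* The points of the strip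
   2 <= y - x <= N - 2 lift the diagonals; (x, y) and (y - N, x) lift the same one, and the pivoting
   moves about y and about x add 1 to x and to y respectively. *)
definition proj_diag :: "nat \<Rightarrow> int \<Rightarrow> int \<Rightarrow> nat set" where
  "proj_diag N x y = {nat (x mod int N), nat (y mod int N)}"

definition proj_pt :: "nat \<Rightarrow> int \<times> int \<Rightarrow> nat set" where
  "proj_pt N q = proj_diag N (fst q) (snd q)"

definition in_strip :: "nat \<Rightarrow> int \<Rightarrow> int \<Rightarrow> bool" where
  "in_strip N x y \<longleftrightarrow> 2 \<le> y - x \<and> y - x \<le> int N - 2"

lemma mod_eq_cases:
  fixes a b M :: int
  assumes "a mod M = b mod M" "M > 0"
  shows "a = b \<or> a + M \<le> b \<or> b + M \<le> a"
proof -
  obtain k where k: "a - b = M * k"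
    using assms(1) by (metis mod_eq_dvd_iff dvd_def)
  consider "k = 0" | "k \<ge> 1" | "k \<le> -1" by linarith
  then show ?thesis
  proof cases
    case 2
    then have "M * k \<ge> M" using assms(2) by (simp add: mult_le_cancel_left1)
    then show ?thesis using k by linarith
  next
    case 3
    then have "M * k \<le> - M" using assms(2)
      by (metis mult.right_neutral mult_le_cancel_left_pos mult_minus_right)
    then show ?thesis using k by linarith
  qed (use k in simp)
qed

lemma proj_diag_eq_cases:
  assumes "N > 0" and "proj_diag N u v = proj_diag N u' v'"
  shows "((u = u' \<or> u + int N \<le> u' \<or> u' + int N \<le> u) \<and> (v = v' \<or> v + int N \<le> v' \<or> v' + int N \<le> v)) \<or>
         ((u = v' \<or> u + int N \<le> v' \<or> v' + int N \<le> u) \<and> (v = u' \<or> v + int N \<le> u' \<or> u' + int N \<le> v))"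
proof -
  have "(u mod int N = u' mod int N \<and> v mod int N = v' mod int N) \<or>
        (u mod int N = v' mod int N \<and> v mod int N = u' mod int N)"
    using assms unfolding proj_diag_def by (auto simp: doubleton_eq_iff eq_nat_nat_iff)
  then show ?thesis using mod_eq_cases assms(1) by (metis of_nat_0_less_iff)
qed

lemma proj_diag_swap_shift: "proj_diag N x y = proj_diag N (y - int N) x"
  unfolding proj_diag_def by (auto simp: insert_commute)

lemma proj_diag_less: "N > 0 \<Longrightarrow> z \<in> proj_diag N x y \<Longrightarrow> z < N"
  unfolding proj_diag_def by (auto simp: nat_less_iff)

lemma nat_mod_plus1:
  assumes "N > 0"
  shows "nat ((x + 1) mod int N) = (nat (x mod int N) + 1) mod N"
proof -
  have "int ((nat (x mod int N) + 1) mod N) = (x mod int N + 1) mod int N"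
    using assms by (simp add: zmod_int ac_simps)
  also have "\<dots> = (x + 1) mod int N" by (simp add: mod_add_left_eq)
  finally show ?thesis by (metis nat_int)
qed

lemma cdist_proj:
  assumes "N > 0"
  shows "int (cdist N (nat (x mod int N)) (nat (z mod int N))) = (z - x) mod int N"
proof -
  have "int (cdist N (nat (x mod int N)) (nat (z mod int N))) =
      (z mod int N + int N - x mod int N) mod int N"
    using assms unfolding cdist_def
    by (simp add: zmod_int of_nat_diff nat_less_iff less_imp_le add_increasing)
  also have "\<dots> = (z mod int N - x mod int N) mod int N"
    by (metis add_diff_eq mod_add_self2 add.commute diff_add_eq)
  also have "\<dots> = (z - x) mod int N" by (simp add: mod_diff_eq)
  finally show ?thesis .
qed

lemma cdist_proj_eq:
  assumes "N > 0" "0 < z - x" "z - x < int N"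
  shows "cdist N (nat (x mod int N)) (nat (z mod int N)) = nat (z - x)"
  using cdist_proj[OF assms(1), of x z] assms(2,3) by simp

lemma in_arc_iff_between:
  assumes N: "N > 0" and xy: "0 < y - x" "y - x < int N" and c: "c < N"
  shows "in_arc N (nat (x mod int N)) (nat (y mod int N)) c \<longleftrightarrow>
    (\<exists>u. x < u \<and> u < y \<and> c = nat (u mod int N))"
proof -
  have hc: "int (cdist N (nat (x mod int N)) c) = (int c - x) mod int N"
    using cdist_proj[OF N, of x "int c"] c by simp
  have hy: "int (cdist N (nat (x mod int N)) (nat (y mod int N))) = y - x"
    using cdist_proj[OF N, of x y] xy by simp
  have c': "c = nat (int c mod int N)" using c by simp
  have "in_arc N (nat (x mod int N)) (nat (y mod int N)) c \<longleftrightarrow>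
      0 < (int c - x) mod int N \<and> (int c - x) mod int N < y - x"
    unfolding in_arc_def hc[symmetric] hy[symmetric] by linarith
  also have "\<dots> \<longleftrightarrow> (\<exists>u. x < u \<and> u < y \<and> c = nat (u mod int N))"
  proof
    assume "0 < (int c - x) mod int N \<and> (int c - x) mod int N < y - x"
    moreover have "(x + (int c - x) mod int N) mod int N = int c mod int N"
      by (simp add: mod_add_right_eq)
    ultimately show "\<exists>u. x < u \<and> u < y \<and> c = nat (u mod int N)"
      using c' by (intro exI[of _ "x + (int c - x) mod int N"]) auto
  next
    assume "\<exists>u. x < u \<and> u < y \<and> c = nat (u mod int N)"
    then obtain u where u: "x < u" "u < y" "c = nat (u mod int N)" by blast
    then have "int c mod int N = u mod int N" using N by simp
    then have "(int c - x) mod int N = (u - x) mod int N" by (metis mod_diff_left_eq)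
    also have "\<dots> = u - x" using u xy by simp
    finally show "0 < (int c - x) mod int N \<and> (int c - x) mod int N < y - x" using u by simp
  qed
  finally show ?thesis .
qed

lemma crosses_doubleton:
  "crosses N {a, b} e \<longleftrightarrow> (\<exists>c c'. e = {c, c'} \<and> in_arc N a b c \<and> in_arc N b a c')"
  unfolding crosses_def by (auto simp: doubleton_eq_iff insert_commute)

lemma proj_crosses_iff:
  assumes N: "N > 0" and s: "in_strip N x y" and e: "\<forall>z\<in>e. z < N"
  shows "crosses N (proj_diag N x y) e \<longleftrightarrow>
    (\<exists>u v. x < u \<and> u < y \<and> y < v \<and> v < x + int N \<and> e = proj_diag N u v)"
proof -
  have xy: "in_arc N (nat (x mod int N)) (nat (y mod int N)) c \<longleftrightarrow>
      (\<exists>u. x < u \<and> u < y \<and> c = nat (u mod int N))" if "c < N" for c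
    by (rule in_arc_iff_between[OF N _ _ that]) (use s in \<open>auto simp: in_strip_def\<close>)
  have yx: "in_arc N (nat (y mod int N)) (nat (x mod int N)) c \<longleftrightarrow>
      (\<exists>v. y < v \<and> v < x + int N \<and> c = nat (v mod int N))" if "c < N" for c
  proof -
    have "in_arc N (nat (y mod int N)) (nat ((x + int N) mod int N)) c \<longleftrightarrow>
        (\<exists>v. y < v \<and> v < x + int N \<and> c = nat (v mod int N))"
      by (rule in_arc_iff_between[OF N _ _ that]) (use s in \<open>auto simp: in_strip_def\<close>)
    then show ?thesis by simp
  qed
  have lt: "nat (u mod int N) < N" for u using N by (simp add: nat_less_iff)
  show ?thesis
  proof
    assume "crosses N (proj_diag N x y) e"
    then obtain c c' where cc: "e = {c, c'}" "in_arc N (nat (x mod int N)) (nat (y mod int N)) c"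
        "in_arc N (nat (y mod int N)) (nat (x mod int N)) c'"
      unfolding proj_diag_def crosses_doubleton by blast
    then obtain u v where "x < u" "u < y" "c = nat (u mod int N)"
        "y < v" "v < x + int N" "c' = nat (v mod int N)"
      using xy yx e by auto
    then show "\<exists>u v. x < u \<and> u < y \<and> y < v \<and> v < x + int N \<and> e = proj_diag N u v"
      using cc(1) unfolding proj_diag_def by blast
  next
    assume "\<exists>u v. x < u \<and> u < y \<and> y < v \<and> v < x + int N \<and> e = proj_diag N u v"
    then obtain u v where "x < u" "u < y" "y < v" "v < x + int N" "e = proj_diag N u v" by blast
    then show "crosses N (proj_diag N x y) e"
      unfolding proj_diag_def crosses_doubleton using xy[OF lt] yx[OF lt] by blast
  qed
qed

lemma border_edge_proj_succ:
  assumes "N > 0"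
  shows "border_edge N (proj_diag N x (x + 1))"
  unfolding border_edge_def proj_diag_def using nat_mod_plus1[OF assms, of x] assms
  by (intro exI[of _ "nat (x mod int N)"]) (simp add: nat_less_iff)

lemma border_edge_proj_pred:
  assumes "N > 0"
  shows "border_edge N (proj_diag N x (x + int N - 1))"
  using border_edge_proj_succ[OF assms, of "x - 1"] proj_diag_swap_shift[of N x "x + int N - 1"]
  by (simp add: insert_commute proj_diag_def)

lemma not_border_edge_proj:
  assumes N: "N > 0" and s: "in_strip N x y"
  shows "\<not> border_edge N (proj_diag N x y)"
proof
  have NN: "int N > 0" using N by simp
  assume "border_edge N (proj_diag N x y)"
  then obtain a where "a < N" "proj_diag N x y = {a, (a + 1) mod N}"
    unfolding border_edge_def by blast
  then have "(nat (x mod int N) = a \<and> nat (y mod int N) = (a + 1) mod N) \<or>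
             (nat (y mod int N) = a \<and> nat (x mod int N) = (a + 1) mod N)"
    unfolding proj_diag_def by (auto simp: doubleton_eq_iff)
  then have "y mod int N = (x + 1) mod int N \<or> x mod int N = (y + 1) mod int N"
    using nat_mod_plus1[OF N] by (metis NN eq_nat_nat_iff pos_mod_sign)
  then show False
    using mod_eq_cases[OF _ NN, of y "x + 1"] mod_eq_cases[OF _ NN, of x "y + 1"] s
    unfolding in_strip_def by linarith
qed

lemma diagonal_proj:
  assumes N: "N > 0" and s: "in_strip N x y"
  shows "diagonal N (proj_diag N x y)"
proof -
  have "x mod int N \<noteq> y mod int N"
    using mod_eq_cases[of x "int N" y] N s unfolding in_strip_def by auto
  then have "nat (x mod int N) \<noteq> nat (y mod int N)" using N by (simp add: eq_nat_nat_iff)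
  then show ?thesis
    unfolding diagonal_def using not_border_edge_proj[OF N s] proj_diag_less[OF N]
    unfolding proj_diag_def by blast
qed

lemma diagonal_lift:
  assumes N: "N > 0" and d: "diagonal N d"
  obtains x y where "in_strip N x y" "d = proj_diag N x y"
proof -
  obtain a b where ab: "a < b" "b < N" "d = {a, b}" and nb: "\<not> border_edge N d"
  proof -
    obtain a b where "a < N" "b < N" "a \<noteq> b" "d = {a, b}" "\<not> border_edge N d"
      using d unfolding diagonal_def by blast
    then show thesis using that[of a b] that[of b a] by (cases "a < b") (auto simp: insert_commute)
  qed
  have pd: "proj_diag N (int a) (int b) = d" using ab unfolding proj_diag_def by simp
  have "int b \<noteq> int a + 1" "int b \<noteq> int a + int N - 1"
    using border_edge_proj_succ[OF N, of "int a"] border_edge_proj_pred[OF N, of "int a"] nb pd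
    by auto
  then have "in_strip N (int a) (int b)" unfolding in_strip_def using ab by linarith
  with pd that show thesis by metis
qed

lemma crosses_if_between:
  assumes N: "N > 0" and s: "in_strip N x y"
    and uv: "x < u" "u < y" "y < v" "v < x + int N"
  shows "in_strip N u v" and "crosses N (proj_diag N u v) (proj_diag N x y)"
proof -
  show su: "in_strip N u v" using s uv unfolding in_strip_def by auto
  have lt: "\<forall>z\<in>proj_diag N y (x + int N). z < N" using proj_diag_less[OF N] by blast
  have "crosses N (proj_diag N u v) (proj_diag N y (x + int N))"
    unfolding proj_crosses_iff[OF N su lt] using uv
    by (intro exI[of _ y] exI[of _ "x + int N"]) auto
  then show "crosses N (proj_diag N u v) (proj_diag N x y)"
    using proj_diag_swap_shift[of N y "x + int N"] by (simp add: proj_diag_def insert_commute)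
qed

lemma crosses_proj_iff:
  assumes N: "N > 0" and s: "in_strip N x y" and e: "diagonal N e"
  shows "crosses N e (proj_diag N x y) \<longleftrightarrow>
    (\<exists>u v. x < u \<and> u < y \<and> y < v \<and> v < x + int N \<and> e = proj_diag N u v)"
proof
  assume "\<exists>u v. x < u \<and> u < y \<and> y < v \<and> v < x + int N \<and> e = proj_diag N u v"
  then show "crosses N e (proj_diag N x y)" using crosses_if_between(2)[OF N s] by blast
next
  obtain a b where ab: "in_strip N a b" "e = proj_diag N a b" using diagonal_lift[OF N e] .
  assume "crosses N e (proj_diag N x y)"
  moreover have "\<forall>z\<in>proj_diag N x y. z < N" using proj_diag_less[OF N] by blast
  ultimately obtain c d where "a < c" "c < b" "b < d" "d < a + int N" "proj_diag N x y = proj_diag N c d"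
    using proj_crosses_iff[OF N ab(1)] ab(2) by blast
  then have "crosses N (proj_diag N x y) e"
    using crosses_if_between(2)[OF N ab(1)] ab(2) by simp
  moreover have "\<forall>z\<in>e. z < N" using e unfolding diagonal_def by auto
  ultimately show "\<exists>u v. x < u \<and> u < y \<and> y < v \<and> v < x + int N \<and> e = proj_diag N u v"
    using proj_crosses_iff[OF N s] by blast
qed

locale polygon_triangulation =
  fixes N :: nat and T :: "nat set set"
  assumes triangulation: "triangulation N T" and N_pos: "N > 0"
begin

definition pos_pt :: "int \<Rightarrow> int \<Rightarrow> bool" where
  "pos_pt x y \<longleftrightarrow> in_strip N x y \<and> proj_diag N x y \<notin> T"

definition neg_pt :: "int \<Rightarrow> int \<Rightarrow> bool" where
  "neg_pt x y \<longleftrightarrow> in_strip N x y \<and> proj_diag N x y \<in> T"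

lemma diagonal_if_in_T: "d \<in> T \<Longrightarrow> diagonal N d"
  using triangulation unfolding triangulation_def by auto

lemma pos_root_proj: "pos_pt x y \<Longrightarrow> pos_root N T (proj_diag N x y)"
  unfolding pos_pt_def pos_root_def using diagonal_proj[OF N_pos] by blast

lemma neg_pts_noncrossing:
  assumes "neg_pt x y" "neg_pt u v"
  shows "\<not> (x < u \<and> u < y \<and> y < v \<and> v < x + int N)"
proof
  assume "x < u \<and> u < y \<and> y < v \<and> v < x + int N"
  then have "crosses N (proj_diag N u v) (proj_diag N x y)"
    using crosses_if_between(2)[OF N_pos] assms unfolding neg_pt_def by blast
  then show False using triangulation assms unfolding triangulation_def neg_pt_def by blast
qed

lemma pos_pt_crossed:
  assumes "pos_pt x y"
  obtains u v where "x < u" "u < y" "y < v" "v < x + int N" "neg_pt u v"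
proof -
  have s: "in_strip N x y" using assms unfolding pos_pt_def by blast
  obtain e where e: "e \<in> T" "crosses N (proj_diag N x y) e"
    using triangulation assms diagonal_proj[OF N_pos s] unfolding triangulation_def pos_pt_def
    by blast
  moreover have "\<forall>z\<in>e. z < N" using diagonal_if_in_T[OF e(1)] unfolding diagonal_def by auto
  ultimately obtain u v where "x < u" "u < y" "y < v" "v < x + int N" "e = proj_diag N u v"
    using proj_crosses_iff[OF N_pos s] by blast
  then show thesis
    using that e crosses_if_between(1)[OF N_pos s] unfolding neg_pt_def by blast
qed

lemma supp_proj:
  assumes "in_strip N x y"
  shows "t \<in> supp N T (proj_diag N x y) \<longleftrightarrow>
    t \<in> T \<and> (\<exists>u v. x < u \<and> u < y \<and> y < v \<and> v < x + int N \<and> t = proj_diag N u v)"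
  unfolding supp_def using crosses_proj_iff[OF N_pos assms] diagonal_if_in_T by auto

lemma neg_pt_in_supp:
  assumes "in_strip N x y" "x < u" "u < y" "y < v" "v < x + int N" "neg_pt u v"
  shows "proj_diag N u v \<in> supp N T (proj_diag N x y)"
  using supp_proj[OF assms(1)] assms unfolding neg_pt_def by blast

end

section \<open>Pivoting paths as lattice walks\<close>

lemma piv_path_single: "piv_path N T [a] \<longleftrightarrow> pos_root N T a"
  unfolding piv_path_def by auto

lemma piv_path_Cons2:
  "piv_path N T (a # b # r) \<longleftrightarrow> pos_root N T a \<and> pivot_move N a b \<and> piv_path N T (b # r)"
  unfolding piv_path_def by (auto simp: less_Suc_eq_0_disj)

definition step :: "int \<times> int \<Rightarrow> bool \<Rightarrow> int \<times> int" where
  "step P b = (if b then (fst P + 1, snd P) else (fst P, snd P + 1))"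

fun walk :: "int \<times> int \<Rightarrow> bool list \<Rightarrow> (int \<times> int) list" where
  "walk P [] = [P]"
| "walk P (b # w) = P # walk (step P b) w"

definition walk_end :: "int \<times> int \<Rightarrow> bool list \<Rightarrow> int \<times> int" where
  "walk_end P w = last (walk P w)"

definition in_box :: "int \<times> int \<Rightarrow> int \<times> int \<Rightarrow> int \<Rightarrow> int \<Rightarrow> bool" where
  "in_box P Q X Y \<longleftrightarrow> fst P \<le> X \<and> X \<le> fst Q \<and> snd P \<le> Y \<and> Y \<le> snd Q"

lemma walk_ne [simp]: "walk P w \<noteq> []"
  by (cases w) auto

lemma hd_walk [simp]: "hd (walk P w) = P"
  by (cases w) auto

lemma walk_end_Nil [simp]: "walk_end P [] = P"
  by (simp add: walk_end_def)

lemma walk_end_Cons [simp]: "walk_end P (b # w) = walk_end (step P b) w"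
  by (simp add: walk_end_def)

lemma walk_append: "walk P (u @ v) = butlast (walk P u) @ walk (walk_end P u) v"
  by (induction u arbitrary: P) (auto simp: walk_end_def)

lemma walk_end_append: "walk_end P (u @ v) = walk_end (walk_end P u) v"
  by (induction u arbitrary: P) auto

lemma walk_end_eq:
  "walk_end P w = (fst P + int (count (mset w) True), snd P + int (count (mset w) False))"
  by (induction w arbitrary: P) (auto simp: step_def)

lemma walk_end_mset: "mset w = mset w' \<Longrightarrow> walk_end P w = walk_end P w'"
  unfolding walk_end_eq by simp

lemma mset_eq_if_walk_end_eq:
  assumes "walk_end P w = walk_end P w'"
  shows "mset w = mset w'"
proof (rule multiset_eqI)
  fix b :: bool
  show "count (mset w) b = count (mset w') b"
    using assms unfolding walk_end_eq by (cases b) auto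
qed

lemma walk_in_box: "q \<in> set (walk P w) \<Longrightarrow> in_box P (walk_end P w) (fst q) (snd q)"
  unfolding in_box_def
proof (induction w arbitrary: P)
  case (Cons b w)
  show ?case
  proof (cases "q = P")
    case True
    then show ?thesis using walk_end_eq[of P "b # w"] by (auto simp del: walk_end_Cons)
  next
    case False
    then have "q \<in> set (walk (step P b) w)" using Cons by simp
    moreover have "fst P \<le> fst (step P b)" "snd P \<le> snd (step P b)" by (auto simp: step_def)
    ultimately show ?thesis using Cons.IH by fastforce
  qed
qed simp

lemma step_in_box_iff:
  "in_box P (walk_end P w) (fst (step P c)) (snd (step P c)) \<longleftrightarrow> c \<in> set w"
proof -
  have "c \<in> set w \<longleftrightarrow> 0 < count (mset w) c" by simp
  then show ?thesis unfolding in_box_def walk_end_eq step_def by (cases c) auto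
qed

context polygon_triangulation
begin

definition walk_path :: "int \<times> int \<Rightarrow> bool list \<Rightarrow> nat set list" where
  "walk_path P w = map (proj_pt N) (walk P w)"

definition pos_walk :: "int \<times> int \<Rightarrow> bool list \<Rightarrow> bool" where
  "pos_walk P w \<longleftrightarrow> (\<forall>q\<in>set (walk P w). pos_pt (fst q) (snd q))"

definition pos_box :: "int \<times> int \<Rightarrow> int \<times> int \<Rightarrow> bool" where
  "pos_box P Q \<longleftrightarrow> (\<forall>X Y. in_box P Q X Y \<longrightarrow> pos_pt X Y)"

lemma hd_walk_path: "hd (walk_path P w) = proj_pt N P"
  unfolding walk_path_def by (simp add: hd_map)

lemma last_walk_path: "last (walk_path P w) = proj_pt N (walk_end P w)"
  unfolding walk_path_def walk_end_def by (simp add: last_map)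

lemma walk_path_ne: "walk_path P w \<noteq> []"
  unfolding walk_path_def by simp

lemma pos_walk_Cons: "pos_walk P (b # w) \<longleftrightarrow> pos_pt (fst P) (snd P) \<and> pos_walk (step P b) w"
  unfolding pos_walk_def by simp

lemma pos_walk_append: "pos_walk P (u @ v) \<longleftrightarrow> pos_walk P u \<and> pos_walk (walk_end P u) v"
proof -
  have "set (walk P u) = set (butlast (walk P u)) \<union> {walk_end P u}"
    unfolding walk_end_def by (metis walk_ne append_butlast_last_id set_append empty_set
        list.set(2) Un_insert_right sup_bot.right_neutral)
  moreover have "walk_end P u \<in> set (walk (walk_end P u) v)" by (metis hd_walk walk_ne hd_in_set)
  ultimately show ?thesis unfolding pos_walk_def walk_append by auto
qed

lemma pos_walk_start: "pos_walk P w \<Longrightarrow> pos_pt (fst P) (snd P)"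
  by (cases w) (auto simp: pos_walk_def)

lemma pos_walk_if_pos_box: "pos_box P (walk_end P w) \<Longrightarrow> pos_walk P w"
  unfolding pos_walk_def pos_box_def using walk_in_box by blast

lemma pos_box_mono: "pos_box P Q \<Longrightarrow> fst P \<le> fst P' \<Longrightarrow> snd P \<le> snd P' \<Longrightarrow> pos_box P' Q"
  unfolding pos_box_def in_box_def by auto

lemma not_pos_pt_in_other_step_box:
  assumes "in_box P Q X Y" "\<not> pos_pt X Y" "pos_pt (fst P) (snd P)" "pos_box (step P b) Q"
  shows "in_box (step P (\<not> b)) Q X Y"
proof -
  have "(X, Y) \<noteq> P" "\<not> in_box (step P b) Q X Y" using assms(2-4) unfolding pos_box_def by auto
  then show ?thesis using assms(1) unfolding in_box_def step_def by (cases b) (auto simp: prod_eq_iff)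
qed

lemma pivot_move_step: "pivot_move N (proj_diag N x y) (proj_pt N (step (x, y) b))"
  unfolding pivot_move_def proj_pt_def step_def proj_diag_def
  using nat_mod_plus1[OF N_pos] by (cases b) (auto simp: insert_commute)

lemma piv_path_walk_path: "pos_walk P w \<Longrightarrow> piv_path N T (walk_path P w)"
proof (induction w arbitrary: P)
  case Nil
  then show ?case
    using pos_root_proj by (simp add: walk_path_def pos_walk_def piv_path_single proj_pt_def)
next
  case (Cons b w)
  obtain r where r: "walk_path (step P b) w = proj_pt N (step P b) # r"
    by (cases w) (auto simp: walk_path_def)
  have "walk_path P (b # w) = proj_pt N P # proj_pt N (step P b) # r"
    using r by (simp add: walk_path_def)
  moreover have "pos_root N T (proj_pt N P)"
    using Cons.prems pos_walk_Cons pos_root_proj unfolding proj_pt_def by blast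
  moreover have "pivot_move N (proj_pt N P) (proj_pt N (step P b))"
    using pivot_move_step[of "fst P" "snd P"] by (simp add: proj_pt_def)
  moreover have "piv_path N T (proj_pt N (step P b) # r)"
    using Cons.IH[of "step P b"] Cons.prems r by (simp add: pos_walk_Cons)
  ultimately show ?case using piv_path_Cons2 by simp
qed

lemma pivot_move_cases:
  assumes "pivot_move N (proj_diag N x y) g"
  obtains b where "g = proj_pt N (step (x, y) b)"
proof -
  obtain v w where vw: "proj_diag N x y = {v, w}" "g = {v, (w + 1) mod N}"
    using assms unfolding pivot_move_def by blast
  then have "(nat (x mod int N) = v \<and> nat (y mod int N) = w) \<or>
             (nat (x mod int N) = w \<and> nat (y mod int N) = v)"
    unfolding proj_diag_def by (auto simp: doubleton_eq_iff)
  then have "g = proj_pt N (step (x, y) False) \<or> g = proj_pt N (step (x, y) True)"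
    using vw(2) nat_mod_plus1[OF N_pos] unfolding proj_pt_def step_def proj_diag_def
    by (auto simp: insert_commute)
  then show thesis using that by blast
qed

lemma in_strip_step:
  assumes "in_strip N x y" "diagonal N (proj_pt N (step (x, y) b))"
  shows "in_strip N (fst (step (x, y) b)) (snd (step (x, y) b))"
proof (cases b)
  case True
  have "y \<noteq> (x + 1) + 1"
    using border_edge_proj_succ[OF N_pos, of "x + 1"] assms True
    unfolding diagonal_def proj_pt_def step_def by auto
  then show ?thesis using assms True unfolding in_strip_def step_def by auto
next
  case False
  have "y + 1 \<noteq> x + int N - 1"
  proof
    assume h: "y + 1 = x + int N - 1"
    have "border_edge N (proj_pt N (step (x, y) b))"
      using border_edge_proj_pred[OF N_pos, of x] False unfolding proj_pt_def step_def h[symmetric]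
      by simp
    then show False using assms(2) unfolding diagonal_def by blast
  qed
  then show ?thesis using assms False unfolding in_strip_def step_def by auto
qed

lemma piv_path_lift:
  "piv_path N T ps \<Longrightarrow> in_strip N x y \<Longrightarrow> hd ps = proj_diag N x y \<Longrightarrow>
    \<exists>w. walk_path (x, y) w = ps \<and> pos_walk (x, y) w"
proof (induction ps arbitrary: x y rule: induct_list012)
  case 1
  then show ?case by (simp add: piv_path_def)
next
  case (2 a)
  then have "pos_pt x y" using piv_path_single unfolding pos_pt_def pos_root_def by auto
  then show ?case using 2 by (intro exI[of _ "[]"]) (auto simp: walk_path_def pos_walk_def proj_pt_def)
next
  case (3 a b r)
  have h: "pos_root N T a" "pivot_move N a b" "piv_path N T (b # r)"
    using "3.prems"(1) piv_path_Cons2 by auto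
  have a: "a = proj_diag N x y" using "3.prems" by simp
  obtain c where c: "b = proj_pt N (step (x, y) c)" using pivot_move_cases h(2) a by metis
  have "diagonal N b" using h(3) unfolding piv_path_def pos_root_def by auto
  then have "in_strip N (fst (step (x, y) c)) (snd (step (x, y) c))"
    using in_strip_step "3.prems"(2) c by blast
  then obtain w where w: "walk_path (step (x, y) c) w = b # r" "pos_walk (step (x, y) c) w"
    using "3.IH"(2)[OF h(3)] c unfolding proj_pt_def by (metis list.sel(1) prod.collapse)
  have "walk_path (x, y) (c # w) = a # b # r" using w a by (simp add: walk_path_def proj_pt_def)
  moreover have "pos_walk (x, y) (c # w)"
    using w(2) h(1) a "3.prems"(2) unfolding pos_walk_Cons pos_pt_def pos_root_def by simp
  ultimately show ?case by blast
qed

end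

section \<open>Theta and the mesh relations\<close>

lemma Theta_path_eq:
  "p \<noteq> [] \<Longrightarrow> Theta_path N T p i r c =
     (if r = 0 \<and> c = 0 \<and> (\<forall>\<beta>\<in>set p. i \<in> supp N T \<beta>) then 1 else 0)"
proof (induction p arbitrary: r c rule: induct_list012)
  case (2 \<beta>) then show ?case by (simp add: Theta_id_def)
next
  case (3 \<beta> \<gamma> rest)
  show ?case
  proof (cases "i \<in> supp N T \<gamma>")
    case True
    then have "Theta_path N T (\<beta> # \<gamma> # rest) i r c =
       Theta_path N T (\<gamma> # rest) i r 0 * Theta_move N T \<beta> \<gamma> i 0 c"
      by (simp add: mmul_def Theta_obj_def)
    then show ?thesis using "3.IH"(2)[of r 0] True by (auto simp: Theta_move_def)
  next
    case False
    then show ?thesis by (simp add: mmul_def Theta_obj_def)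
  qed
qed simp

interpretation fun_module: module "\<lambda>(k::complex) (f :: 'a \<Rightarrow> complex) w. k * f w"
  by unfold_locales (auto simp: fun_eq_iff algebra_simps)

lemma sum_fun_apply: "(\<Sum>h\<in>S. F h) w = (\<Sum>h\<in>S. F h w)"
  by (induction S rule: infinite_finite_induct) auto

lemma mesh_span_eq_span: "mesh_span N T \<alpha> \<alpha>' = fun_module.span (mesh_gens N T \<alpha> \<alpha>')"
  unfolding mesh_span_def fun_module.span_explicit by (auto simp: sum_fun_apply fun_eq_iff)

definition path_vec :: "nat set list \<Rightarrow> nat set list \<Rightarrow> complex" where
  "path_vec p = (\<lambda>w. if w = p then 1 else 0)"

lemma finite_support_path_vec: "finite {w. path_vec p w \<noteq> 0}"
  by (rule finite_subset[of _ "{p}"]) (auto simp: path_vec_def)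

lemma sum_path_vec_eq:
  assumes "finite {p. c p \<noteq> 0}"
  shows "(\<Sum>p | c p \<noteq> 0. c p * path_vec p w) = c w"
proof -
  have "(\<Sum>p | c p \<noteq> 0. c p * path_vec p w) = (\<Sum>p | c p \<noteq> 0. if w = p then c p else 0)"
    by (intro sum.cong) (auto simp: path_vec_def)
  also have "\<dots> = c w" using assms by (simp add: sum.delta')
  finally show ?thesis .
qed

lemma Theta_lin_superset:
  assumes "finite F" "{p. c p \<noteq> 0} \<subseteq> F"
  shows "Theta_lin N T c = (\<lambda>i r s. \<Sum>p\<in>F. c p * Theta_path N T p i r s)"
  unfolding Theta_lin_def using assms by (intro ext sum.mono_neutral_left) auto

lemma Theta_lin_path_vec: "Theta_lin N T (path_vec p) = Theta_path N T p"
  using Theta_lin_superset[of "{p}" "path_vec p" N T] by (simp add: path_vec_def)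

lemma Theta_lin_scale_path_vec:
  "Theta_lin N T (\<lambda>w. k * path_vec p w) = (\<lambda>i r s. k * Theta_path N T p i r s)"
proof -
  have "{w. k * path_vec p w \<noteq> 0} \<subseteq> {p}" by (auto simp: path_vec_def)
  from Theta_lin_superset[OF _ this] show ?thesis by (simp add: path_vec_def)
qed

lemma Theta_lin_linear:
  assumes "finite {p. a p \<noteq> 0}" "finite {p. b p \<noteq> 0}"
  shows "Theta_lin N T (\<lambda>w. k * a w + b w) =
    (\<lambda>i r s. k * Theta_lin N T a i r s + Theta_lin N T b i r s)"
proof -
  let ?F = "{p. a p \<noteq> 0} \<union> {p. b p \<noteq> 0}"
  have F: "finite ?F" using assms by simp
  have "Theta_lin N T (\<lambda>w. k * a w + b w) =
      (\<lambda>i r s. \<Sum>p\<in>?F. (k * a p + b p) * Theta_path N T p i r s)"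
    by (rule Theta_lin_superset[OF F]) auto
  moreover have "Theta_lin N T a = (\<lambda>i r s. \<Sum>p\<in>?F. a p * Theta_path N T p i r s)"
    by (rule Theta_lin_superset[OF F]) auto
  moreover have "Theta_lin N T b = (\<lambda>i r s. \<Sum>p\<in>?F. b p * Theta_path N T p i r s)"
    by (rule Theta_lin_superset[OF F]) auto
  ultimately show ?thesis
    by (simp add: distrib_right sum.distrib sum_distrib_left mult.assoc)
qed

context polygon_triangulation
begin

lemma mesh_square_supp:
  assumes s: "in_strip N x y"
    and i: "i \<in> supp N T (proj_diag N x y)" "i \<in> supp N T (proj_diag N (x + 1) (y + 1))"
  shows "pos_pt x (y + 1)" "pos_pt (x + 1) y"
    "i \<in> supp N T (proj_diag N x (y + 1))" "i \<in> supp N T (proj_diag N (x + 1) y)"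
proof -
  have s': "in_strip N (x + 1) (y + 1)" using s unfolding in_strip_def by auto
  obtain u v where uv: "x < u" "u < y" "y < v" "v < x + int N" "i = proj_diag N u v" and "i \<in> T"
    using i(1) supp_proj[OF s] by blast
  obtain u' v' where uv': "x + 1 < u'" "u' < y + 1" "y + 1 < v'" "v' < x + 1 + int N"
      "i = proj_diag N u' v'"
    using i(2) supp_proj[OF s'] by blast
  have "proj_diag N u v = proj_diag N u' v'" using uv(5) uv'(5) by simp
  from proj_diag_eq_cases[OF N_pos this] have "u = u' \<and> v = v'"
    using uv uv' by (elim disjE conjE; linarith)
  then have box: "x + 1 < u" "u < y" "y + 1 < v" "v < x + int N" using uv uv' by auto
  have neg: "neg_pt u v"
    using \<open>i \<in> T\<close> uv crosses_if_between(1)[OF N_pos s uv(1-4)] unfolding neg_pt_def by simp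
  have s1: "in_strip N x (y + 1)" "in_strip N (x + 1) y" using s box unfolding in_strip_def by auto
  show "pos_pt x (y + 1)" "pos_pt (x + 1) y"
    using neg_pts_noncrossing[OF _ neg, of x "y + 1"] neg_pts_noncrossing[OF _ neg, of "x + 1" y]
      s1 box unfolding pos_pt_def neg_pt_def by auto
  show "i \<in> supp N T (proj_diag N x (y + 1))" "i \<in> supp N T (proj_diag N (x + 1) y)"
    using neg_pt_in_supp[OF s1(1), of u v] neg_pt_in_supp[OF s1(2), of u v] neg box uv(5) by auto
qed

lemma mesh_square_proj:
  assumes "{a, b} = proj_diag N x y"
  shows "{(a + 1) mod N, (b + 1) mod N} = proj_diag N (x + 1) (y + 1)"
    and "({a, (b + 1) mod N} = proj_diag N x (y + 1) \<and> {(a + 1) mod N, b} = proj_diag N (x + 1) y) \<or>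
         ({a, (b + 1) mod N} = proj_diag N (x + 1) y \<and> {(a + 1) mod N, b} = proj_diag N x (y + 1))"
proof -
  have "(nat (x mod int N) = a \<and> nat (y mod int N) = b) \<or> (nat (x mod int N) = b \<and> nat (y mod int N) = a)"
    using assms unfolding proj_diag_def by (auto simp: doubleton_eq_iff)
  then show "{(a + 1) mod N, (b + 1) mod N} = proj_diag N (x + 1) (y + 1)"
    "({a, (b + 1) mod N} = proj_diag N x (y + 1) \<and> {(a + 1) mod N, b} = proj_diag N (x + 1) y) \<or>
     ({a, (b + 1) mod N} = proj_diag N (x + 1) y \<and> {(a + 1) mod N, b} = proj_diag N x (y + 1))"
    unfolding proj_diag_def nat_mod_plus1[OF N_pos] by (auto simp: insert_commute)
qed

lemma mesh_square_supp_labels: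
  assumes "pos_root N T {a, b}"
    and "i \<in> supp N T {a, b}" "i \<in> supp N T {(a + 1) mod N, (b + 1) mod N}"
  shows "i \<in> supp N T {a, (b + 1) mod N} \<and> i \<in> supp N T {(a + 1) mod N, b} \<and>
    pos_root N T {(a + 1) mod N, b}"
proof -
  obtain x y where xy: "in_strip N x y" "{a, b} = proj_diag N x y"
    using assms(1) diagonal_lift[OF N_pos] unfolding pos_root_def by metis
  show ?thesis
    using mesh_square_supp[OF xy(1), of i] mesh_square_proj[OF xy(2)] assms(2,3) xy(2) pos_root_proj
    by auto
qed

lemma Theta_lin_mesh_gen:
  assumes "g \<in> mesh_gens N T \<alpha> \<alpha>'"
  shows "Theta_lin N T g = (\<lambda>i r s. 0)"
proof -
  obtain p q a b where "piv_path N T (p @ [{a, b}, {a, (b + 1) mod N}, {(a + 1) mod N, (b + 1) mod N}] @ q)"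
    and g: "if pos_root N T {(a + 1) mod N, b}
          then g = (\<lambda>w. path_vec (p @ [{a, b}, {a, (b + 1) mod N}, {(a + 1) mod N, (b + 1) mod N}] @ q) w
                     - path_vec (p @ [{a, b}, {(a + 1) mod N, b}, {(a + 1) mod N, (b + 1) mod N}] @ q) w)
          else g = path_vec (p @ [{a, b}, {a, (b + 1) mod N}, {(a + 1) mod N, (b + 1) mod N}] @ q)"
    using assms unfolding mesh_gens_def Let_def path_vec_def by (auto cong: if_cong)
  then have "pos_root N T {a, b}" unfolding piv_path_def by auto
  note square = mesh_square_supp_labels[OF this]
  let ?w1 = "p @ [{a, b}, {a, (b + 1) mod N}, {(a + 1) mod N, (b + 1) mod N}] @ q"
  let ?w2 = "p @ [{a, b}, {(a + 1) mod N, b}, {(a + 1) mod N, (b + 1) mod N}] @ q"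
  show ?thesis
  proof (cases "pos_root N T {(a + 1) mod N, b}")
    case True
    have "Theta_path N T ?w1 = Theta_path N T ?w2"
      using square by (intro ext) (auto simp: Theta_path_eq)
    then show ?thesis
      using g True Theta_lin_linear[OF finite_support_path_vec finite_support_path_vec, of N T "-1"]
      by (simp add: Theta_lin_path_vec)
  next
    case False
    have "Theta_path N T ?w1 = (\<lambda>i r s. 0)"
      using square False by (intro ext) (auto simp: Theta_path_eq)
    then show ?thesis using g False by (simp add: Theta_lin_path_vec)
  qed
qed

lemma Theta_lin_mesh_span:
  assumes "g \<in> mesh_span N T \<alpha> \<alpha>'"
  shows "Theta_lin N T g = (\<lambda>i r s. 0)"
proof -
  have "finite {p. g p \<noteq> 0} \<and> Theta_lin N T g = (\<lambda>i r s. 0)"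
    using assms[unfolded mesh_span_eq_span]
  proof (induction rule: fun_module.span_induct_alt)
    case base
    show ?case by (simp add: Theta_lin_def)
  next
    case (step k h g)
    have "finite {p. h p \<noteq> 0}"
      using step.hyps(1) unfolding mesh_gens_def Let_def
      by (auto split: if_splits intro: finite_subset[of _ "{_, _}"])
    then show ?case
      using step Theta_lin_linear[of h g N T k] Theta_lin_mesh_gen[of h]
      by (auto intro: finite_subset[of _ "{p. h p \<noteq> 0} \<union> {p. g p \<noteq> 0}"])
  qed
  then show ?thesis by blast
qed


(* A unit square of the lattice is a mesh: its corners (x, y + 1) and (x + 1, y) are the
   intermediate diagonals {a, b + 1} and {a + 1, b} of the relation. *)
lemma mesh_gens_walk_square:
  assumes s: "in_strip N x y"
    and w1: "w1 = p @ [proj_diag N x y, proj_pt N (step (x, y) b), proj_diag N (x + 1) (y + 1)] @ q"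
    and w2: "w2 = p @ [proj_diag N x y, proj_pt N (step (x, y) (\<not> b)), proj_diag N (x + 1) (y + 1)] @ q"
    and pv: "piv_path N T w1" "hd w1 = \<alpha>" "last w1 = \<alpha>'"
  shows "pos_root N T (proj_pt N (step (x, y) (\<not> b))) \<Longrightarrow>
           (\<lambda>w. path_vec w1 w - path_vec w2 w) \<in> mesh_gens N T \<alpha> \<alpha>'"
    and "\<not> pos_root N T (proj_pt N (step (x, y) (\<not> b))) \<Longrightarrow>
         border_edge N (proj_pt N (step (x, y) (\<not> b))) \<or> proj_pt N (step (x, y) (\<not> b)) \<in> T \<Longrightarrow>
           path_vec w1 \<in> mesh_gens N T \<alpha> \<alpha>'"
proof -
  define a where "a = nat ((if b then y else x) mod int N)"
  define a' where "a' = nat ((if b then x else y) mod int N)"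
  have sq: "proj_diag N x y = {a, a'}"
    "proj_pt N (step (x, y) b) = {a, (a' + 1) mod N}"
    "proj_pt N (step (x, y) (\<not> b)) = {(a + 1) mod N, a'}"
    "proj_diag N (x + 1) (y + 1) = {(a + 1) mod N, (a' + 1) mod N}"
    unfolding a_def a'_def proj_pt_def proj_diag_def step_def
    by (simp_all add: insert_commute nat_mod_plus1[OF N_pos])
  show "pos_root N T (proj_pt N (step (x, y) (\<not> b))) \<Longrightarrow>
           (\<lambda>w. path_vec w1 w - path_vec w2 w) \<in> mesh_gens N T \<alpha> \<alpha>'"
    "\<not> pos_root N T (proj_pt N (step (x, y) (\<not> b))) \<Longrightarrow>
         border_edge N (proj_pt N (step (x, y) (\<not> b))) \<or> proj_pt N (step (x, y) (\<not> b)) \<in> T \<Longrightarrow>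
           path_vec w1 \<in> mesh_gens N T \<alpha> \<alpha>'"
    unfolding mesh_gens_def Let_def using pv unfolding w1 w2 sq
    by (intro CollectI exI[of _ p] exI[of _ q] exI[of _ a] exI[of _ a'], simp add: path_vec_def)+
qed

lemma step_not_pos_pt:
  assumes s: "in_strip N x y" and np: "\<not> pos_pt (fst (step (x, y) c)) (snd (step (x, y) c))"
  shows "\<not> pos_root N T (proj_pt N (step (x, y) c)) \<and>
    (border_edge N (proj_pt N (step (x, y) c)) \<or> proj_pt N (step (x, y) c) \<in> T)"
proof (cases "in_strip N (fst (step (x, y) c)) (snd (step (x, y) c))")
  case True
  then show ?thesis using np unfolding pos_pt_def pos_root_def proj_pt_def by simp
next
  case False
  have "border_edge N (proj_pt N (step (x, y) c))"
  proof (cases c)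
    case True
    then have "y = (x + 1) + 1" using False s unfolding in_strip_def step_def by auto
    then show ?thesis using True border_edge_proj_succ[OF N_pos, of "x + 1"]
      unfolding proj_pt_def step_def by simp
  next
    case c: False
    then have h: "y + 1 = x + int N - 1" using False s unfolding in_strip_def step_def by auto
    show ?thesis using c border_edge_proj_pred[OF N_pos, of x]
      unfolding proj_pt_def step_def h[symmetric] by simp
  qed
  then show ?thesis unfolding pos_root_def diagonal_def by simp
qed

end

locale rooted_walks = polygon_triangulation +
  fixes P0 :: "int \<times> int" and \<alpha> \<alpha>' :: "nat set"
  assumes proj_P0: "proj_pt N P0 = \<alpha>"
begin

abbreviation mesh :: "(nat set list \<Rightarrow> complex) set" where
  "mesh \<equiv> mesh_span N T \<alpha> \<alpha>'"

definition walk_vec :: "bool list \<Rightarrow> nat set list \<Rightarrow> complex" where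
  "walk_vec w = path_vec (walk_path P0 w)"

definition good_walk :: "bool list \<Rightarrow> bool" where
  "good_walk w \<longleftrightarrow> pos_walk P0 w \<and> proj_pt N (walk_end P0 w) = \<alpha>'"

definition mesh_eqv :: "bool list \<Rightarrow> bool list \<Rightarrow> bool" where
  "mesh_eqv w w' \<longleftrightarrow> walk_vec w - walk_vec w' \<in> mesh"

lemma mesh_eqv_refl: "mesh_eqv w w"
  unfolding mesh_eqv_def mesh_span_eq_span using fun_module.span_zero by simp

lemma mesh_eqv_trans: "mesh_eqv w1 w2 \<Longrightarrow> mesh_eqv w2 w3 \<Longrightarrow> mesh_eqv w1 w3"
  unfolding mesh_eqv_def mesh_span_eq_span using fun_module.span_add by fastforce

lemma mesh_eqv_mesh: "mesh_eqv w1 w2 \<Longrightarrow> walk_vec w2 \<in> mesh \<Longrightarrow> walk_vec w1 \<in> mesh"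
  unfolding mesh_eqv_def mesh_span_eq_span using fun_module.span_add by fastforce

lemma good_walk_split:
  "good_walk (u @ w @ v) \<longleftrightarrow> pos_walk P0 u \<and> pos_walk (walk_end P0 u) w \<and>
    pos_walk (walk_end P0 (u @ w)) v \<and> proj_pt N (walk_end P0 (u @ w @ v)) = \<alpha>'"
  unfolding good_walk_def pos_walk_append walk_end_append by auto

lemma good_walk_replace:
  assumes "good_walk (u @ w @ v)" "mset w' = mset w" "pos_walk (walk_end P0 u) w'"
  shows "good_walk (u @ w' @ v)"
  using assms walk_end_mset[OF assms(2)] unfolding good_walk_split walk_end_append by simp

lemma good_walk_box_replace:
  assumes "good_walk (u @ w @ v)" "pos_box (walk_end P0 u) (walk_end P0 (u @ w))"
    "mset w' = mset w"
  shows "good_walk (u @ w' @ v)"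
  using assms good_walk_replace pos_walk_if_pos_box walk_end_mset[OF assms(3)]
  unfolding walk_end_append by metis

lemma good_walk_swap:
  assumes "good_walk (u @ [b, c] @ v)" "pos_pt (fst (step (walk_end P0 u) c)) (snd (step (walk_end P0 u) c))"
  shows "good_walk (u @ [c, b] @ v)"
proof (rule good_walk_replace[OF assms(1)])
  have "step (step P b) c = step (step P c) b" for P by (simp add: step_def)
  then show "pos_walk (walk_end P0 u) [c, b]"
    using assms unfolding good_walk_split by (auto simp: pos_walk_Cons pos_walk_def)
qed simp

lemma walk_path_swap:
  fixes u v :: "bool list" and b :: bool
  defines "P \<equiv> walk_end P0 u"
  obtains pre post where
    "walk_path P0 (u @ [b, c] @ v) =
      pre @ [proj_pt N P, proj_pt N (step P b), proj_pt N (step (step P b) c)] @ post"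
    "walk_path P0 (u @ [c, b] @ v) =
      pre @ [proj_pt N P, proj_pt N (step P c), proj_pt N (step (step P c) b)] @ post"
proof -
  define S where "S = step (step P b) c"
  have S': "step (step P c) b = S" unfolding S_def by (simp add: step_def)
  have "walk S v = S # tl (walk S v)" by (metis hd_walk walk_ne list.collapse)
  then have "walk P0 (u @ [d, e] @ v) = butlast (walk P0 u) @ [P, step P d, S] @ tl (walk S v)"
    if "step (step P d) e = S" for d e
    using that unfolding walk_append P_def by simp
  from this[of b c] this[of c b] S' show thesis
    using that[of "map (proj_pt N) (butlast (walk P0 u))" "map (proj_pt N) (tl (walk S v))"]
    unfolding walk_path_def S_def by simp
qed

lemma mesh_flip:
  assumes gw: "good_walk (u @ [b, \<not> b] @ v)"
  defines "P \<equiv> walk_end P0 u"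
  shows "pos_pt (fst (step P (\<not> b))) (snd (step P (\<not> b))) \<Longrightarrow>
           mesh_eqv (u @ [b, \<not> b] @ v) (u @ [\<not> b, b] @ v)"
    and "\<not> pos_pt (fst (step P (\<not> b))) (snd (step P (\<not> b))) \<Longrightarrow>
           walk_vec (u @ [b, \<not> b] @ v) \<in> mesh"
proof -
  obtain x y where P: "P = (x, y)" by (cases P)
  have "pos_pt x y" using gw unfolding good_walk_split P_def[symmetric] P by (simp add: pos_walk_Cons)
  then have s: "in_strip N x y" unfolding pos_pt_def by simp
  have corner: "step (step (x, y) b) (\<not> b) = (x + 1, y + 1)" "step (step (x, y) (\<not> b)) b = (x + 1, y + 1)"
    by (auto simp: step_def)
  obtain pre post where
    w1: "walk_path P0 (u @ [b, \<not> b] @ v) =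
      pre @ [proj_diag N x y, proj_pt N (step (x, y) b), proj_diag N (x + 1) (y + 1)] @ post" and
    w2: "walk_path P0 (u @ [\<not> b, b] @ v) =
      pre @ [proj_diag N x y, proj_pt N (step (x, y) (\<not> b)), proj_diag N (x + 1) (y + 1)] @ post"
    using walk_path_swap[of u b "\<not> b" v] corner unfolding P_def[symmetric] P
    by (metis fst_conv snd_conv proj_pt_def)
  have pv: "piv_path N T (walk_path P0 (u @ [b, \<not> b] @ v))"
    "hd (walk_path P0 (u @ [b, \<not> b] @ v)) = \<alpha>" "last (walk_path P0 (u @ [b, \<not> b] @ v)) = \<alpha>'"
    using gw piv_path_walk_path hd_walk_path last_walk_path proj_P0 unfolding good_walk_def by auto
  note gens = mesh_gens_walk_square[OF s w1 w2 pv]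
  show "pos_pt (fst (step P (\<not> b))) (snd (step P (\<not> b))) \<Longrightarrow>
           mesh_eqv (u @ [b, \<not> b] @ v) (u @ [\<not> b, b] @ v)"
    using gens(1) pos_root_proj fun_module.span_base unfolding mesh_eqv_def walk_vec_def
      mesh_span_eq_span P proj_pt_def by (simp add: fun_diff_def)
  show "\<not> pos_pt (fst (step P (\<not> b))) (snd (step P (\<not> b))) \<Longrightarrow>
           walk_vec (u @ [b, \<not> b] @ v) \<in> mesh"
    using gens(2) step_not_pos_pt[OF s] fun_module.span_base
    unfolding walk_vec_def mesh_span_eq_span P by blast
qed


lemma mesh_flip_in_box:
  assumes gw: "good_walk (u @ [b, \<not> b] @ r @ v)"
    and box: "pos_box (walk_end P0 u) (walk_end P0 (u @ [b, \<not> b] @ r))"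
  shows "mesh_eqv (u @ [b, \<not> b] @ r @ v) (u @ [\<not> b, b] @ r @ v)"
    and "good_walk (u @ [\<not> b, b] @ r @ v)"
proof -
  have "in_box (walk_end P0 u) (walk_end P0 (u @ [b, \<not> b] @ r))
      (fst (step (walk_end P0 u) (\<not> b))) (snd (step (walk_end P0 u) (\<not> b)))"
    using step_in_box_iff[of "walk_end P0 u" "[b, \<not> b] @ r" "\<not> b"] unfolding walk_end_append by simp
  then have "pos_pt (fst (step (walk_end P0 u) (\<not> b))) (snd (step (walk_end P0 u) (\<not> b)))"
    using box unfolding pos_box_def by blast
  then show "mesh_eqv (u @ [b, \<not> b] @ r @ v) (u @ [\<not> b, b] @ r @ v)" "good_walk (u @ [\<not> b, b] @ r @ v)"
    using mesh_flip(1)[OF gw] good_walk_swap[OF gw] by auto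
qed

lemma box_mesh_eqv:
  "good_walk (u @ w @ v) \<Longrightarrow> pos_box (walk_end P0 u) (walk_end P0 (u @ w)) \<Longrightarrow>
    mset w' = mset w \<Longrightarrow> mesh_eqv (u @ w @ v) (u @ w' @ v)"
proof (induction "length w" arbitrary: u w w' rule: less_induct)
  case less
  show ?case
  proof (cases w)
    case Nil
    then show ?thesis using less.prems mesh_eqv_refl by simp
  next
    case (Cons b w1)
    obtain c w1' where w': "w' = c # w1'"
      using less.prems(3) Cons by (cases w') auto
    have box_b: "pos_box (walk_end P0 (u @ [d])) (walk_end P0 (u @ w))" for d
      using pos_box_mono[OF less.prems(2)] unfolding walk_end_append by (auto simp: step_def)
    show ?thesis
    proof (cases "c = b")
      case True
      then show ?thesis
        using less.hyps[of w1 "u @ [b]" w1'] less.prems box_b[of b] w' Cons by simp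
    next
      case False
      have "c \<in> set w" using less.prems(3) w' by (metis list.set_intros(1) set_mset_mset)
      then have nb: "(\<not> b) \<in> set w1" and cb: "c = (\<not> b)" using Cons False by auto
      define r where "r = remove1 (\<not> b) w1"
      have r: "mset ((\<not> b) # r) = mset w1" unfolding r_def using nb by simp
      have same_end: "walk_end P0 (u @ [d, \<not> d] @ r) = walk_end P0 (u @ w)" for d
        using r[symmetric] Cons by (intro walk_end_mset) (cases d; cases b; simp add: add_mset_commute)
      have e1: "mesh_eqv (u @ w @ v) (u @ [b, \<not> b] @ r @ v)"
        using less.hyps[of w1 "u @ [b]" "(\<not> b) # r"] less.prems(1) box_b[of b] r Cons by simp
      have gw2: "good_walk (u @ [b, \<not> b] @ r @ v)"
        using good_walk_box_replace[OF less.prems(1,2), of "[b, \<not> b] @ r"] r Cons by simp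
      note flip = mesh_flip_in_box[OF gw2] less.prems(2) same_end[of b]
      have "add_mset (\<not> b) (mset w1') = add_mset (\<not> b) (mset (b # r))"
        using less.prems(3) w' cb Cons r[symmetric] by (simp add: add_mset_commute)
      then have "mset w1' = mset (b # r)" by simp
      moreover have "length (b # r) < length w"
        using Cons nb length_pos_if_in_set[OF nb] unfolding r_def by (simp add: length_remove1)
      moreover have "walk_end P0 ((u @ [\<not> b]) @ b # r) = walk_end P0 (u @ w)"
        using same_end[of "\<not> b"] by simp
      ultimately have e3: "mesh_eqv ((u @ [\<not> b]) @ (b # r) @ v) ((u @ [\<not> b]) @ w1' @ v)"
        using less.hyps[of "b # r" "u @ [\<not> b]" w1'] flip box_b[of "\<not> b"] by simp
      show ?thesis
        using mesh_eqv_trans[OF e1 mesh_eqv_trans[OF _ e3]] flip w' cb by simp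
    qed
  qed
qed

lemma mesh_pull_front:
  assumes gw: "good_walk (u @ b # w1 @ v)"
    and box: "pos_box (walk_end P0 (u @ [b])) (walk_end P0 (u @ b # w1))" and nb: "(\<not> b) \<in> set w1"
  defines "r \<equiv> remove1 (\<not> b) w1"
  shows "mesh_eqv (u @ b # w1 @ v) (u @ [b, \<not> b] @ r @ v)" "good_walk (u @ [b, \<not> b] @ r @ v)"
    "walk_end P0 ((u @ [\<not> b]) @ b # r) = walk_end P0 (u @ b # w1)" "length (b # r) < length (b # w1)"
proof -
  have r: "mset ((\<not> b) # r) = mset w1" unfolding r_def using nb by simp
  show "mesh_eqv (u @ b # w1 @ v) (u @ [b, \<not> b] @ r @ v)"
    using box_mesh_eqv[of "u @ [b]" w1 v "(\<not> b) # r"] gw box r by simp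
  show "good_walk (u @ [b, \<not> b] @ r @ v)"
    using good_walk_box_replace[of "u @ [b]" w1 v "(\<not> b) # r"] gw box r by simp
  show "walk_end P0 ((u @ [\<not> b]) @ b # r) = walk_end P0 (u @ b # w1)"
    unfolding walk_end_append[symmetric] using r[symmetric] by (intro walk_end_mset) simp
  show "length (b # r) < length (b # w1)"
    using nb length_pos_if_in_set[OF nb] unfolding r_def by (simp add: length_remove1)
qed

(* If the bad point is not in the box of the tail, the tail is rearranged to start with the other
   letter; flipping the first two letters then either kills the walk or moves its start towards the
   bad point. *)
lemma box_mesh_kill:
  "good_walk (u @ w @ v) \<Longrightarrow> in_box (walk_end P0 u) (walk_end P0 (u @ w)) X Y \<Longrightarrow>
    \<not> pos_pt X Y \<Longrightarrow> walk_vec (u @ w @ v) \<in> mesh"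
proof (induction "length w" arbitrary: u w X Y rule: less_induct)
  case less
  define P where "P = walk_end P0 u"
  have pos_P: "pos_pt (fst P) (snd P)"
    using less.prems(1) pos_walk_start unfolding good_walk_split P_def by blast
  show ?case
  proof (cases w)
    case Nil
    then show ?thesis using less.prems(2,3) pos_P unfolding P_def in_box_def by auto
  next
    case (Cons b w1)
    show ?thesis
    proof (cases "pos_box (walk_end P0 (u @ [b])) (walk_end P0 (u @ w))")
      case False
      then obtain X' Y' where "in_box (walk_end P0 (u @ [b])) (walk_end P0 ((u @ [b]) @ w1)) X' Y'"
          "\<not> pos_pt X' Y'"
        unfolding pos_box_def using Cons by auto
      then show ?thesis using less.hyps[of w1 "u @ [b]" X' Y'] less.prems(1) Cons by simp
    next
      case box: True
      have XY: "in_box (step P (\<not> b)) (walk_end P0 (u @ w)) X Y"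
        using not_pos_pt_in_other_step_box[OF _ less.prems(3) pos_P] less.prems(2) box Cons
        unfolding P_def walk_end_append by simp
      then have nb: "(\<not> b) \<in> set w1"
        using step_in_box_iff[of P w "\<not> b"] Cons unfolding P_def walk_end_append in_box_def
        by (auto simp: step_def)
      define r where "r = remove1 (\<not> b) w1"
      have "good_walk (u @ b # w1 @ v)" "pos_box (walk_end P0 (u @ [b])) (walk_end P0 (u @ b # w1))"
        using less.prems(1) box Cons by simp_all
      note pull = mesh_pull_front[OF this nb, folded r_def]
      show ?thesis
      proof (cases "pos_pt (fst (step P (\<not> b))) (snd (step P (\<not> b)))")
        case False
        then show ?thesis using mesh_flip(2)[OF pull(2)] mesh_eqv_mesh[OF pull(1)] Cons
          unfolding P_def by simp
      next
        case True
        have "walk_vec ((u @ [\<not> b]) @ (b # r) @ v) \<in> mesh"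
          using less.hyps[of "b # r" "u @ [\<not> b]" X Y] good_walk_swap[OF pull(2)] True pull(3,4)
            XY less.prems(3) Cons unfolding P_def walk_end_append by simp
        then show ?thesis
          using mesh_eqv_mesh[OF mesh_eqv_trans[OF pull(1) mesh_flip(1)[OF pull(2)]]] True Cons
          unfolding P_def by simp
      qed
    qed
  qed
qed

end

section \<open>The zigzag of T-diagonals crossing a root\<close>

lemma finite_strict_total_order_min:
  assumes "finite S" "S \<noteq> {}"
    and total: "\<And>a b. a \<noteq> b \<Longrightarrow> R a b \<or> R b a" and trans: "\<And>a b c. R a b \<Longrightarrow> R b c \<Longrightarrow> R a c"
  shows "\<exists>a\<in>S. \<forall>c\<in>S. c \<noteq> a \<longrightarrow> R a c"
  using assms(1,2)
proof (induction S rule: finite_ne_induct)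
  case (insert c F)
  then obtain a where a: "a \<in> F" "\<forall>d\<in>F. d \<noteq> a \<longrightarrow> R a d" by blast
  show ?case
  proof (cases "R c a")
    case True
    have "R c d" if "d \<in> F" for d
    proof (cases "d = a")
      case False
      then show ?thesis using trans[OF True] a(2) that by blast
    qed (use True in simp)
    then show ?thesis by blast
  next
    case False
    moreover have "c \<noteq> a" using \<open>c \<notin> F\<close> a(1) by blast
    ultimately have "R a c" using total[of c a] by blast
    then show ?thesis using a by blast
  qed
qed simp

(* Lexicographic with the second coordinate reversed: the order along the zigzag of T-diagonals
   crossing a root (crossing_negs_chain). *)
definition stair_less :: "int \<times> int \<Rightarrow> int \<times> int \<Rightarrow> bool" where
  "stair_less a b \<longleftrightarrow> fst a < fst b \<or> (fst a = fst b \<and> snd b < snd a)"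

definition stair_min :: "(int \<times> int) set \<Rightarrow> int \<times> int \<Rightarrow> bool" where
  "stair_min S a \<longleftrightarrow> a \<in> S \<and> (\<forall>c\<in>S. c \<noteq> a \<longrightarrow> stair_less a c)"

definition stair_max :: "(int \<times> int) set \<Rightarrow> int \<times> int \<Rightarrow> bool" where
  "stair_max S a \<longleftrightarrow> a \<in> S \<and> (\<forall>c\<in>S. c \<noteq> a \<longrightarrow> stair_less c a)"

lemma stair_less_total: "a \<noteq> b \<Longrightarrow> stair_less a b \<or> stair_less b a"
  unfolding stair_less_def by (cases a, cases b) auto

lemma stair_less_trans: "stair_less a b \<Longrightarrow> stair_less b c \<Longrightarrow> stair_less a c"
  unfolding stair_less_def by auto

lemma stair_less_irrefl: "\<not> stair_less a a"
  unfolding stair_less_def by auto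

lemma stair_min_exists:
  assumes "finite S" "S \<noteq> {}"
  obtains a where "stair_min S a"
proof -
  have "\<exists>a\<in>S. \<forall>c\<in>S. c \<noteq> a \<longrightarrow> stair_less a c"
    by (rule finite_strict_total_order_min[OF assms]) (metis stair_less_total, metis stair_less_trans)
  then show thesis using that unfolding stair_min_def by blast
qed

lemma stair_max_exists:
  assumes "finite S" "S \<noteq> {}"
  obtains a where "stair_max S a"
proof -
  have "stair_less b a \<or> stair_less a b" if "a \<noteq> b" for a b
    using stair_less_total[OF that] by blast
  moreover have "stair_less c a" if "stair_less b a" "stair_less c b" for a b c
    using stair_less_trans[OF that(2,1)] .
  ultimately obtain a where "a \<in> S" "\<forall>c\<in>S. c \<noteq> a \<longrightarrow> stair_less c a"
    using finite_strict_total_order_min[OF assms, of "\<lambda>a b. stair_less b a"] by blast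
  then show thesis using that unfolding stair_max_def by blast
qed

lemma stair_min_le: "stair_min S a \<Longrightarrow> c \<in> S \<Longrightarrow> \<not> stair_less c a"
  unfolding stair_min_def using stair_less_irrefl stair_less_trans by metis

lemma stair_max_ge: "stair_max S a \<Longrightarrow> c \<in> S \<Longrightarrow> \<not> stair_less a c"
  unfolding stair_max_def using stair_less_irrefl stair_less_trans by metis

lemma stair_succ_exists:
  assumes "finite S" "c \<in> S" "stair_less a c"
  obtains b where "b \<in> S" "stair_less a b" "\<forall>d\<in>S. \<not> (stair_less a d \<and> stair_less d b)"
proof -
  have "finite {d\<in>S. stair_less a d}" using assms(1) by simp
  moreover have "{d\<in>S. stair_less a d} \<noteq> {}" using assms(2,3) by blast
  ultimately obtain b where b: "stair_min {d\<in>S. stair_less a d} b" by (rule stair_min_exists)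
  have "\<not> (stair_less a d \<and> stair_less d b)" if "d \<in> S" for d
  proof (cases "d = b")
    case False
    then show ?thesis using b that stair_less_trans[of d b d] stair_less_irrefl[of d]
      unfolding stair_min_def by blast
  qed (use stair_less_irrefl in blast)
  then show thesis using that b unfolding stair_min_def by blast
qed

lemma stair_pred_exists:
  assumes "finite S" "c \<in> S" "stair_less c a"
  obtains b where "b \<in> S" "stair_less b a" "\<forall>d\<in>S. \<not> (stair_less b d \<and> stair_less d a)"
proof -
  have "finite {d\<in>S. stair_less d a}" using assms(1) by simp
  moreover have "{d\<in>S. stair_less d a} \<noteq> {}" using assms(2,3) by blast
  ultimately obtain b where b: "stair_max {d\<in>S. stair_less d a} b" by (rule stair_max_exists)
  have "\<not> (stair_less b d \<and> stair_less d a)" if "d \<in> S" for d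
  proof (cases "d = b")
    case False
    then show ?thesis using b that stair_less_trans[of b d b] stair_less_irrefl[of b]
      unfolding stair_max_def by blast
  qed (use stair_less_irrefl in blast)
  then show thesis using that b unfolding stair_max_def by blast
qed

lemma stair_transition:
  assumes "finite S" "a0 \<in> S" "Q a0" "stair_max S l" "\<not> Q l"
  obtains a b where "a \<in> S" "b \<in> S" "Q a" "\<not> Q b" "stair_less a b"
    "\<forall>d\<in>S. \<not> (stair_less a d \<and> stair_less d b)"
proof -
  have "finite {a\<in>S. Q a}" using assms(1) by simp
  moreover have "{a\<in>S. Q a} \<noteq> {}" using assms(2,3) by blast
  ultimately obtain a where a: "stair_max {a\<in>S. Q a} a" by (rule stair_max_exists)
  then have "a \<in> S" "Q a" unfolding stair_max_def by auto
  then have "stair_less a l" using assms(4,5) unfolding stair_max_def by metis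
  then obtain b where b: "b \<in> S" "stair_less a b" "\<forall>d\<in>S. \<not> (stair_less a d \<and> stair_less d b)"
    using assms(1,4) unfolding stair_max_def by (metis stair_succ_exists)
  have "\<not> Q b" using stair_max_ge[OF a] b(1,2) by blast
  then show thesis using that \<open>a \<in> S\<close> \<open>Q a\<close> b by blast
qed

lemma stair_const_on_convex:
  assumes S: "finite S" "K \<subseteq> S"
    and convex: "\<And>a b c. a \<in> K \<Longrightarrow> c \<in> K \<Longrightarrow> b \<in> S \<Longrightarrow> stair_less a b \<Longrightarrow> stair_less b c \<Longrightarrow> b \<in> K"
    and step: "\<And>a b. a \<in> K \<Longrightarrow> b \<in> K \<Longrightarrow> stair_less a b \<Longrightarrow>
      \<forall>d\<in>S. \<not> (stair_less a d \<and> stair_less d b) \<Longrightarrow> g a = g b"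
    and ab: "a \<in> K" "b \<in> K"
  shows "g a = g b"
proof -
  obtain m where m: "stair_min K m"
    using stair_min_exists[of K] S ab finite_subset by blast
  have "g c = g m" if "c \<in> K" for c
    using that
  proof (induction "card {d \<in> K. stair_less d c}" arbitrary: c rule: less_induct)
    case less
    show ?case
    proof (cases "c = m")
      case False
      have mK: "m \<in> K" and mc: "stair_less m c" using m less.prems False unfolding stair_min_def by auto
      obtain b where b: "b \<in> S" "stair_less b c" "\<forall>d\<in>S. \<not> (stair_less b d \<and> stair_less d c)"
        using stair_pred_exists[OF S(1) _ mc] mK S(2) by blast
      have "b = m \<or> stair_less m b"
        using b(3) mK S(2) mc stair_less_total by blast
      then have bK: "b \<in> K" using convex[OF mK less.prems b(1) _ b(2)] mK by blast
      have "{d \<in> K. stair_less d b} \<subset> {d \<in> K. stair_less d c}"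
        using bK b(2) stair_less_trans stair_less_irrefl by blast
      then have "g b = g m"
        using less.hyps bK psubset_card_mono[of "{d \<in> K. stair_less d c}"] finite_subset[OF S(2,1)]
        by simp
      then show ?thesis using step[OF bK less.prems b(2)] b(3) by simp
    qed simp
  qed
  then show ?thesis using ab by simp
qed

context polygon_triangulation
begin

definition crossing_negs :: "int \<Rightarrow> int \<Rightarrow> (int \<times> int) set" where
  "crossing_negs x y = {(u, v). x < u \<and> u < y \<and> y < v \<and> v < x + int N \<and> neg_pt u v}"

definition tri_edge :: "int \<Rightarrow> int \<Rightarrow> bool" where
  "tri_edge x y \<longleftrightarrow> proj_diag N x y \<in> T \<or> border_edge N (proj_diag N x y)"

lemma finite_crossing_negs: "finite (crossing_negs x y)"
proof -
  have "crossing_negs x y \<subseteq> {x<..<y} \<times> {y<..<x + int N}" unfolding crossing_negs_def by auto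
  then show ?thesis by (rule finite_subset) auto
qed

lemma crossing_negs_ne: "pos_pt x y \<Longrightarrow> crossing_negs x y \<noteq> {}"
  using pos_pt_crossed unfolding crossing_negs_def by blast

lemma crossing_negs_chain:
  "a \<in> crossing_negs x y \<Longrightarrow> b \<in> crossing_negs x y \<Longrightarrow> fst a < fst b \<Longrightarrow> snd b \<le> snd a"
  unfolding crossing_negs_def using neg_pts_noncrossing[of "fst a" "snd a" "fst b" "snd b"] by force

lemma stair_less_crossing_negs:
  "a \<in> crossing_negs x y \<Longrightarrow> b \<in> crossing_negs x y \<Longrightarrow> stair_less a b \<Longrightarrow>
    fst a \<le> fst b \<and> snd b \<le> snd a"
  using crossing_negs_chain[of a x y b] unfolding stair_less_def by auto

lemma neg_pt_swap_shift: "neg_pt x y \<Longrightarrow> neg_pt (y - int N) x"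
  using proj_diag_swap_shift[of N x y] unfolding neg_pt_def in_strip_def by auto

lemma neg_pt_shift_swap: "neg_pt x y \<Longrightarrow> neg_pt y (x + int N)"
  using proj_diag_swap_shift[of N y "x + int N"] unfolding neg_pt_def in_strip_def by auto

lemma not_tri_edge_if_pos_pt: "pos_pt x y \<Longrightarrow> \<not> tri_edge x y"
  unfolding pos_pt_def tri_edge_def using not_border_edge_proj[OF N_pos] by blast

lemma tri_edge_swap_shift: "tri_edge x y \<Longrightarrow> tri_edge (y - int N) x"
  unfolding tri_edge_def using proj_diag_swap_shift[of N x y] by simp


lemma tri_edge_if_uncrossed:
  assumes "1 \<le> y - x" "y - x \<le> int N - 1"
    and uncrossed: "\<And>c d. x < c \<Longrightarrow> c < y \<Longrightarrow> y < d \<Longrightarrow> d < x + int N \<Longrightarrow> \<not> neg_pt c d"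
  shows "tri_edge x y"
proof -
  consider "y = x + 1" | "y = x + int N - 1" | "in_strip N x y"
    using assms(1,2) unfolding in_strip_def by linarith
  then show ?thesis
  proof cases
    case 3
    show ?thesis
    proof (rule ccontr)
      assume "\<not> tri_edge x y"
      then have "pos_pt x y" using 3 unfolding tri_edge_def pos_pt_def by simp
      then show False using pos_pt_crossed uncrossed by metis
    qed
  qed (use border_edge_proj_succ[OF N_pos] border_edge_proj_pred[OF N_pos] tri_edge_def in simp_all)
qed

lemma stair_min_tri_edges:
  assumes "pos_pt x y" and f: "stair_min (crossing_negs x y) (p, q)"
  shows "tri_edge x p" "tri_edge x q"
proof -
  have pq: "x < p" "p < y" "y < q" "q < x + int N" "neg_pt p q"
    using f unfolding stair_min_def crossing_negs_def by auto
  have s: "in_strip N x y" using assms(1) unfolding pos_pt_def by simp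
  have fm: "\<not> stair_less (c, d) (p, q)" if "(c, d) \<in> crossing_negs x y" for c d
    using stair_min_le[OF f that] .
  show "tri_edge x p"
  proof (rule tri_edge_if_uncrossed)
    fix c d assume cd: "x < c" "c < p" "p < d" "d < x + int N"
    show "\<not> neg_pt c d"
    proof
      assume neg: "neg_pt c d"
      then have "q \<le> d" using neg_pts_noncrossing[OF neg pq(5)] cd pq by auto
      then have "(c, d) \<in> crossing_negs x y" using neg cd pq unfolding crossing_negs_def by auto
      then show False using fm[of c d] cd unfolding stair_less_def by auto
    qed
  qed (use pq s in \<open>auto simp: in_strip_def\<close>)
  show "tri_edge x q"
  proof (rule tri_edge_if_uncrossed)
    fix c d assume cd: "x < c" "c < q" "q < d" "d < x + int N"
    show "\<not> neg_pt c d"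
    proof
      assume neg: "neg_pt c d"
      then have "\<not> p < c" using neg_pts_noncrossing[OF pq(5) neg] cd pq by auto
      then have "(c, d) \<in> crossing_negs x y" using neg cd pq unfolding crossing_negs_def by auto
      then show False using fm[of c d] cd \<open>\<not> p < c\<close> unfolding stair_less_def by auto
    qed
  qed (use pq s in \<open>auto simp: in_strip_def\<close>)
qed

lemma stair_max_tri_edges:
  assumes "pos_pt x y" and f: "stair_max (crossing_negs x y) (p, q)"
  shows "tri_edge p y" "tri_edge y q"
proof -
  have pq: "x < p" "p < y" "y < q" "q < x + int N" "neg_pt p q"
    using f unfolding stair_max_def crossing_negs_def by auto
  have s: "in_strip N x y" using assms(1) unfolding pos_pt_def by simp
  have fm: "\<not> stair_less (p, q) (c, d)" if "(c, d) \<in> crossing_negs x y" for c d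
    using stair_max_ge[OF f that] .
  show "tri_edge p y"
  proof (rule tri_edge_if_uncrossed)
    fix c d assume cd: "p < c" "c < y" "y < d" "d < p + int N"
    show "\<not> neg_pt c d"
    proof
      assume neg: "neg_pt c d"
      then have "d \<le> q" using neg_pts_noncrossing[OF pq(5) neg] cd pq by auto
      then have "(c, d) \<in> crossing_negs x y" using neg cd pq unfolding crossing_negs_def by auto
      then show False using fm[of c d] cd unfolding stair_less_def by auto
    qed
  qed (use pq s in \<open>auto simp: in_strip_def\<close>)
  show "tri_edge y q"
  proof (rule tri_edge_if_uncrossed)
    fix c d assume cd: "y < c" "c < q" "q < d" "d < y + int N"
    show "\<not> neg_pt c d"
    proof
      assume neg: "neg_pt c d"
      then have "p + int N \<le> d" using neg_pts_noncrossing[OF pq(5) neg] cd pq by auto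
      then have "(d - int N, c) \<in> crossing_negs x y"
        using neg_pt_swap_shift[OF neg] cd pq unfolding crossing_negs_def by auto
      then show False using fm[of "d - int N" c] cd \<open>p + int N \<le> d\<close> unfolding stair_less_def by auto
    qed
  qed (use pq s in \<open>auto simp: in_strip_def\<close>)
qed

lemma stair_consec_cases:
  assumes a: "(u, v) \<in> crossing_negs x y" and b: "(u', v') \<in> crossing_negs x y"
    and less: "stair_less (u, v) (u', v')"
    and consec: "\<forall>d\<in>crossing_negs x y. \<not> (stair_less (u, v) d \<and> stair_less d (u', v'))"
  shows "u = u' \<and> v' < v \<or> v = v' \<and> u < u'"
proof (rule ccontr)
  have A: "x < u" "u < y" "y < v" "v < x + int N" "neg_pt u v"
    and B: "x < u'" "u' < y" "y < v'" "v' < x + int N" "neg_pt u' v'"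
    using a b unfolding crossing_negs_def by auto
  assume "\<not> ?thesis"
  then have c1: "u < u'" "v' < v" using less crossing_negs_chain[OF a b] unfolding stair_less_def by auto
  show False
  proof (cases "pos_pt u' v")
    case False
    then have "(u', v) \<in> crossing_negs x y"
      using A B c1 unfolding crossing_negs_def neg_pt_def pos_pt_def in_strip_def by auto
    then show False using consec c1 unfolding stair_less_def by auto
  next
    case True
    then obtain c d where cd: "u' < c" "c < v" "v < d" "d < u' + int N" "neg_pt c d"
      by (rule pos_pt_crossed)
    have "u + int N \<le> d" using neg_pts_noncrossing[OF A(5) cd(5)] cd c1 by auto
    moreover have "v' \<le> c" using neg_pts_noncrossing[OF B(5) cd(5)] cd c1 by auto
    ultimately have "(d - int N, c) \<in> crossing_negs x y"
      using cd A B neg_pt_swap_shift[OF cd(5)] unfolding crossing_negs_def by auto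
    moreover have "stair_less (u, v) (d - int N, c)" "stair_less (d - int N, c) (u', v')"
      using \<open>u + int N \<le> d\<close> \<open>v' \<le> c\<close> cd c1 unfolding stair_less_def by auto
    ultimately show False using consec by blast
  qed
qed

lemma stair_consec_same_fst_tri_edge:
  assumes a: "(u, v) \<in> crossing_negs x y" and b: "(u, v') \<in> crossing_negs x y" and "v' < v"
    and consec: "\<forall>d\<in>crossing_negs x y. \<not> (stair_less (u, v) d \<and> stair_less d (u, v'))"
  shows "tri_edge v' v"
proof (rule tri_edge_if_uncrossed)
  have A: "x < u" "u < y" "y < v" "v < x + int N" "neg_pt u v"
    and B: "y < v'" "v' < x + int N" "neg_pt u v'"
    using a b unfolding crossing_negs_def by auto
  fix c d assume cd: "v' < c" "c < v" "v < d" "d < v' + int N"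
  show "\<not> neg_pt c d"
  proof
    assume neg: "neg_pt c d"
    have "d = u + int N"
      using neg_pts_noncrossing[OF A(5) neg] neg_pts_noncrossing[OF neg_pt_shift_swap[OF B(3)] neg]
        cd A B by auto
    then have "(u, c) \<in> crossing_negs x y"
      using neg_pt_swap_shift[OF neg] cd A B unfolding crossing_negs_def by auto
    then show False using consec cd unfolding stair_less_def by auto
  qed
qed (use assms in \<open>auto simp: crossing_negs_def\<close>)

lemma stair_consec_same_snd_tri_edge:
  assumes a: "(u, v) \<in> crossing_negs x y" and b: "(u', v) \<in> crossing_negs x y" and "u < u'"
    and consec: "\<forall>d\<in>crossing_negs x y. \<not> (stair_less (u, v) d \<and> stair_less d (u', v))"
  shows "tri_edge u u'"
proof (rule tri_edge_if_uncrossed)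
  have A: "x < u" "u < y" "y < v" "v < x + int N" "neg_pt u v"
    and B: "u' < y" "neg_pt u' v"
    using a b unfolding crossing_negs_def by auto
  fix c d assume cd: "u < c" "c < u'" "u' < d" "d < u + int N"
  show "\<not> neg_pt c d"
  proof
    assume neg: "neg_pt c d"
    have "d = v" using neg_pts_noncrossing[OF neg B(2)] neg_pts_noncrossing[OF A(5) neg] cd A B by auto
    then have "(c, v) \<in> crossing_negs x y" using neg cd A B unfolding crossing_negs_def by auto
    then show False using consec cd unfolding stair_less_def by auto
  qed
qed (use assms in \<open>auto simp: crossing_negs_def\<close>)

lemma stair_consec_tri_edge:
  assumes "(u, v) \<in> crossing_negs x y" "(u', v') \<in> crossing_negs x y" "stair_less (u, v) (u', v')"
    "\<forall>d\<in>crossing_negs x y. \<not> (stair_less (u, v) d \<and> stair_less d (u', v'))"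
  shows "u = u' \<and> v' < v \<and> tri_edge v' v \<or> v = v' \<and> u < u' \<and> tri_edge u u'"
  using stair_consec_cases[OF assms] stair_consec_same_fst_tri_edge[of u v x y v']
    stair_consec_same_snd_tri_edge[of u v x y u'] assms
  by auto

(* Otherwise the zigzag crossing the corner (x1, y0) starts with a T-diagonal ending beyond x0 + N
   and ends with one ending below y1; where it switches, consecutive members close a triangle whose
   third side lifts into the box, which contains only positive points. *)
lemma pos_box_crossed:
  assumes box: "pos_box (x0, y0) (x1, y1)" and le: "x0 \<le> x1" "y0 \<le> y1"
  obtains u v where "x1 < u" "u < y0" "y1 < v" "v < x0 + int N" "neg_pt u v"
proof (rule ccontr)
  assume "\<not> thesis"
  then have none: "\<not> (x1 < u \<and> u < y0 \<and> y1 < v \<and> v < x0 + int N \<and> neg_pt u v)" for u v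
    using that by blast
  have in_box: "\<not> tri_edge X Y" if "x0 \<le> X" "X \<le> x1" "y0 \<le> Y" "Y \<le> y1" for X Y
    using box not_tri_edge_if_pos_pt that unfolding pos_box_def in_box_def by auto
  have corner: "pos_pt x1 y0" using box le unfolding pos_box_def in_box_def by auto
  let ?S = "crossing_negs x1 y0"
  have high_or_low: "snd a \<le> y1 \<or> x0 + int N \<le> snd a" if "a \<in> ?S" for a
    using none[of "fst a" "snd a"] that unfolding crossing_negs_def by force
  obtain p q where f: "stair_min ?S (p, q)"
    using stair_min_exists[OF finite_crossing_negs crossing_negs_ne[OF corner]] by (metis surj_pair)
  then have fS: "(p, q) \<in> ?S" unfolding stair_min_def by simp
  have "x0 + int N \<le> q"
    using high_or_low[OF fS] stair_min_tri_edges(2)[OF corner f] in_box[of x1 q] fS le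
    unfolding crossing_negs_def by auto
  obtain p' q' where l: "stair_max ?S (p', q')"
    using stair_max_exists[OF finite_crossing_negs crossing_negs_ne[OF corner]] by (metis surj_pair)
  then have lS: "(p', q') \<in> ?S" unfolding stair_max_def by simp
  have "\<not> x0 + int N \<le> q'"
  proof
    assume "x0 + int N \<le> q'"
    moreover have "tri_edge (q' - int N) y0"
      using tri_edge_swap_shift[OF stair_max_tri_edges(2)[OF corner l]] .
    ultimately show False using in_box[of "q' - int N" y0] lS le unfolding crossing_negs_def by auto
  qed
  obtain a b where ab: "a \<in> ?S" "b \<in> ?S" "x0 + int N \<le> snd a" "\<not> x0 + int N \<le> snd b"
      "stair_less a b" "\<forall>d\<in>?S. \<not> (stair_less a d \<and> stair_less d b)"
    by (rule stair_transition[where Q = "\<lambda>a. x0 + int N \<le> snd a", OF finite_crossing_negs fS _ l])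
      (use \<open>x0 + int N \<le> q\<close> \<open>\<not> x0 + int N \<le> q'\<close> in simp_all)
  obtain ua va ub vb where ap: "a = (ua, va)" and bp: "b = (ub, vb)" by (cases a, cases b)
  have "vb \<le> y1" using high_or_low[OF ab(2)] ab(4) bp by simp
  then have "tri_edge vb va"
    using stair_consec_tri_edge[of ua va x1 y0 ub vb] ab ap bp le by auto
  then have "tri_edge (va - int N) vb" by (rule tri_edge_swap_shift)
  then show False
    using in_box[of "va - int N" vb] ab(1-3) \<open>vb \<le> y1\<close> ap bp unfolding crossing_negs_def by auto
qed


section \<open>Faithfulness\<close>

lemma pos_box_corners:
  assumes "pos_box (x0, y0) (x1, y1)" "x0 \<le> x1" "y0 \<le> y1"
  shows "2 \<le> y0 - x1" "y1 - x0 \<le> int N - 2"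
  using assms unfolding pos_box_def in_box_def pos_pt_def in_strip_def
  by (metis fst_conv snd_conv order_refl)+

lemma pos_box_end_unique:
  assumes "proj_pt N Q = proj_pt N Q'" "pos_box P Q" "pos_box P Q'"
    "fst P \<le> fst Q" "snd P \<le> snd Q" "fst P \<le> fst Q'" "snd P \<le> snd Q'"
  shows "Q = Q'"
proof -
  obtain x0 y0 x1 y1 x2 y2 where P: "P = (x0, y0)" and Q: "Q = (x1, y1)" and Q': "Q' = (x2, y2)"
    by (metis surj_pair)
  have c: "2 \<le> y0 - x1" "y1 - x0 \<le> int N - 2" "2 \<le> y0 - x2" "y2 - x0 \<le> int N - 2"
    using pos_box_corners assms unfolding P Q Q' by auto
  have "proj_diag N x1 y1 = proj_diag N x2 y2" using assms(1) unfolding proj_pt_def Q Q' by simp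
  from proj_diag_eq_cases[OF N_pos this] have "x1 = x2 \<and> y1 = y2"
    using c assms(4-7) unfolding P Q Q' by (elim disjE conjE; simp; linarith)
  then show ?thesis unfolding Q Q' by simp
qed

lemma walk_path_supp_if_crossing:
  assumes box: "pos_box P (walk_end P w)" and mem: "\<beta> \<in> set (walk_path P w)"
    and uv: "fst (walk_end P w) < u" "u < snd P" "snd (walk_end P w) < v" "v < fst P + int N"
      "neg_pt u v"
  shows "proj_diag N u v \<in> supp N T \<beta>"
proof -
  obtain q where q: "q \<in> set (walk P w)" "\<beta> = proj_pt N q"
    using mem unfolding walk_path_def set_map by blast
  have qb: "in_box P (walk_end P w) (fst q) (snd q)" using walk_in_box[OF q(1)] .
  then have "in_strip N (fst q) (snd q)" using box unfolding pos_box_def pos_pt_def by blast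
  then show ?thesis
    using neg_pt_in_supp[of "fst q" "snd q" u v] uv q(2) qb unfolding in_box_def proj_pt_def by auto
qed

lemma Theta_path_pos_box:
  assumes "pos_box P (walk_end P w)"
  obtains i where "Theta_path N T (walk_path P w) i 0 0 = 1"
proof -
  obtain x0 y0 x1 y1 where P: "P = (x0, y0)" and Q: "walk_end P w = (x1, y1)" by (metis surj_pair)
  have le: "x0 \<le> x1" "y0 \<le> y1" using Q unfolding P walk_end_eq by auto
  have box: "pos_box (x0, y0) (x1, y1)" using assms P Q by simp
  obtain u v where "x1 < u" "u < y0" "y1 < v" "v < x0 + int N" "neg_pt u v"
    by (rule pos_box_crossed[OF box le])
  then have "\<forall>\<beta>\<in>set (walk_path P w). proj_diag N u v \<in> supp N T \<beta>"
    using walk_path_supp_if_crossing[OF assms] P Q by simp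
  then show thesis using that Theta_path_eq[OF walk_path_ne] by metis
qed

end

context rooted_walks
begin

lemma mesh_sum:
  assumes "finite S" "\<And>p. p \<in> S \<Longrightarrow> g p \<in> mesh"
  shows "(\<lambda>w. \<Sum>p\<in>S. k p * g p w) \<in> mesh"
proof -
  have "(\<Sum>p\<in>S. (\<lambda>w. k p * g p w)) \<in> mesh"
    unfolding mesh_span_eq_span using assms(2)[unfolded mesh_span_eq_span]
    by (intro fun_module.span_sum fun_module.span_scale) auto
  then show ?thesis by (simp add: sum_fun_apply[abs_def])
qed

lemma walk_vec_mesh_if_not_pos_box:
  assumes "good_walk w" "\<not> pos_box P0 (walk_end P0 w)"
  shows "walk_vec w \<in> mesh"
  using assms box_mesh_kill[of "[]" w "[]"] unfolding pos_box_def by auto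

lemma mesh_eqv_if_pos_box:
  assumes "good_walk w" "good_walk w'" "pos_box P0 (walk_end P0 w)" "pos_box P0 (walk_end P0 w')"
  shows "mesh_eqv w w'"
proof -
  have "walk_end P0 w = walk_end P0 w'"
    using pos_box_end_unique[of "walk_end P0 w" "walk_end P0 w'" P0] assms
    unfolding good_walk_def walk_end_eq by auto
  then have "mset w' = mset w" by (metis mset_eq_if_walk_end_eq)
  then show ?thesis using box_mesh_eqv[of "[]" w "[]" w'] assms by simp
qed

lemma free_hom_walks:
  assumes "pos_pt (fst P0) (snd P0)" "c \<in> free_hom N T \<alpha> \<alpha>'"
  obtains W where "\<And>p. c p \<noteq> 0 \<Longrightarrow> walk_path P0 (W p) = p \<and> good_walk (W p)"
proof -
  have "\<exists>w. walk_path P0 w = p \<and> good_walk w" if "c p \<noteq> 0" for p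
  proof -
    have p: "piv_path N T p" "hd p = proj_diag N (fst P0) (snd P0)" "last p = \<alpha>'"
      using assms(2) that proj_P0 unfolding free_hom_def proj_pt_def by auto
    then obtain w where "walk_path P0 w = p" "pos_walk P0 w"
      using piv_path_lift[OF p(1) _ p(2)] assms(1) unfolding pos_pt_def by auto
    then show ?thesis using p(3) last_walk_path unfolding good_walk_def by metis
  qed
  then show thesis using that by metis
qed

lemma mesh_modulo_path_vec:
  assumes S: "finite S" "G \<subseteq> S" and out: "\<And>p. p \<in> S - G \<Longrightarrow> path_vec p \<in> mesh"
    and eqv: "\<And>p. p \<in> G \<Longrightarrow> (\<lambda>w. path_vec p w - path_vec p1 w) \<in> mesh"
  shows "(\<lambda>w. (\<Sum>p\<in>S. c p * path_vec p w) - (\<Sum>p\<in>G. c p) * path_vec p1 w) \<in> mesh"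
proof -
  define g where "g p = (\<lambda>w. path_vec p w - (if p \<in> G then path_vec p1 w else 0))" for p
  have "g p \<in> mesh" if "p \<in> S" for p
    using that out eqv unfolding g_def by (cases "p \<in> G") auto
  then have "(\<lambda>w. \<Sum>p\<in>S. c p * g p w) \<in> mesh" using mesh_sum[OF S(1)] by blast
  moreover have "(\<Sum>p\<in>S. c p * (if p \<in> G then path_vec p1 w else 0)) = (\<Sum>p\<in>G. c p) * path_vec p1 w" for w
  proof -
    have "(\<Sum>p\<in>S. c p * (if p \<in> G then path_vec p1 w else 0)) =
        (\<Sum>p\<in>S. if p \<in> G then c p * path_vec p1 w else 0)"
      by (intro sum.cong) auto
    also have "\<dots> = (\<Sum>p\<in>G. c p) * path_vec p1 w"
      using sum.inter_restrict[OF S(1), of "\<lambda>p. c p * path_vec p1 w" G] S(2)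
      by (simp add: Int_absorb1 sum_distrib_right)
    finally show ?thesis .
  qed
  ultimately show ?thesis unfolding g_def by (simp add: right_diff_distrib sum_subtractf)
qed

(* Walks leaving the positive region vanish modulo mesh relations, the others end at the same lift
   of alpha' and are mesh-equivalent, so c reduces to a multiple of a single path. *)
lemma free_hom_mesh_reduction:
  assumes "pos_pt (fst P0) (snd P0)" "c \<in> free_hom N T \<alpha> \<alpha>'"
  obtains lam p0 where "(\<lambda>w. c w - lam * path_vec p0 w) \<in> mesh"
    and "lam = 0 \<or> (\<exists>i. Theta_path N T p0 i 0 0 = 1)"
proof -
  define S where "S = {p. c p \<noteq> 0}"
  have S: "finite S" using assms(2) unfolding S_def by (simp add: free_hom_def)
  obtain W where "\<And>p. c p \<noteq> 0 \<Longrightarrow> walk_path P0 (W p) = p \<and> good_walk (W p)"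
    using free_hom_walks[OF assms] by blast
  then have W: "\<And>p. p \<in> S \<Longrightarrow> walk_path P0 (W p) = p \<and> good_walk (W p)" unfolding S_def by simp
  define G where "G = {p \<in> S. pos_box P0 (walk_end P0 (W p))}"
  define p1 where "p1 = (SOME p. p \<in> G)"
  have "(\<lambda>w. (\<Sum>p\<in>S. c p * path_vec p w) - (\<Sum>p\<in>G. c p) * path_vec p1 w) \<in> mesh"
  proof (rule mesh_modulo_path_vec[OF S])
    show "G \<subseteq> S" unfolding G_def by blast
  next
    fix p assume "p \<in> S - G"
    then show "path_vec p \<in> mesh"
      using walk_vec_mesh_if_not_pos_box[of "W p"] W[of p] unfolding G_def walk_vec_def by auto
  next
    fix p assume "p \<in> G"
    then have "p1 \<in> G" unfolding p1_def by (rule someI)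
    then show "(\<lambda>w. path_vec p w - path_vec p1 w) \<in> mesh"
      using mesh_eqv_if_pos_box[of "W p" "W p1"] W \<open>p \<in> G\<close>
      unfolding G_def mesh_eqv_def walk_vec_def by (auto simp: fun_diff_def)
  qed
  moreover have "(\<Sum>p\<in>S. c p * path_vec p w) = c w" for w
    using sum_path_vec_eq[of c w] S unfolding S_def by simp
  moreover have "(\<Sum>p\<in>G. c p) = 0 \<or> (\<exists>i. Theta_path N T p1 i 0 0 = 1)"
  proof (cases "G = {}")
    case False
    then have "p1 \<in> G" unfolding p1_def by (simp add: some_in_eq)
    then show ?thesis using Theta_path_pos_box[of P0 "W p1"] W unfolding G_def by auto
  qed simp
  ultimately show thesis using that by auto
qed

lemma Theta_faithful:
  assumes "pos_pt (fst P0) (snd P0)" "c \<in> free_hom N T \<alpha> \<alpha>'" "Theta_lin N T c = (\<lambda>i r s. 0)"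
  shows "c \<in> mesh"
proof -
  obtain lam p0 where red: "(\<lambda>w. c w - lam * path_vec p0 w) \<in> mesh"
    and nz: "lam = 0 \<or> (\<exists>i. Theta_path N T p0 i 0 0 = 1)"
    using free_hom_mesh_reduction[OF assms(1,2)] by blast
  have "finite {p. c p \<noteq> 0}" using assms(2) by (simp add: free_hom_def)
  from Theta_lin_linear[OF finite_support_path_vec this, of N T "- lam" p0]
  have "Theta_lin N T (\<lambda>w. c w - lam * path_vec p0 w) = (\<lambda>i r s. - lam * Theta_path N T p0 i r s)"
    using assms(3) by (simp add: Theta_lin_path_vec)
  then have "\<forall>i r s. - lam * Theta_path N T p0 i r s = 0"
    using Theta_lin_mesh_span[OF red] by (simp add: fun_eq_iff)
  then have "lam = 0" using nz by (metis minus_mult_left mult.right_neutral neg_equal_0_iff_equal)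
  then show ?thesis using red by simp
qed

end

section \<open>Fullness\<close>

lemma rep_hom_Theta_obj_support:
  assumes "f \<in> rep_hom N T (Theta_obj N T \<alpha>) (Theta_obj N T \<alpha>')" "f t r s \<noteq> 0"
  shows "r = 0 \<and> s = 0 \<and> t \<in> supp N T \<alpha> \<and> t \<in> supp N T \<alpha>'"
proof -
  have "\<not> (fst (Theta_obj N T \<alpha>') t \<le> r \<or> fst (Theta_obj N T \<alpha>) t \<le> s)"
    using assms unfolding rep_hom_def by blast
  then show ?thesis unfolding Theta_obj_def by (auto split: if_splits)
qed

lemma rep_hom_Theta_obj_arrow:
  assumes "f \<in> rep_hom N T (Theta_obj N T \<alpha>) (Theta_obj N T \<alpha>')" "arrow N T j i"
  shows "(if i \<in> supp N T \<alpha>' \<and> j \<in> supp N T \<alpha>' then f j 0 0 else 0) =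
         (if i \<in> supp N T \<alpha> \<and> j \<in> supp N T \<alpha> then f i 0 0 else 0)"
proof -
  have "mmul (snd (Theta_obj N T \<alpha>') j i) (f j) (fst (Theta_obj N T \<alpha>') j) 0 0 =
        mmul (f i) (snd (Theta_obj N T \<alpha>) j i) (fst (Theta_obj N T \<alpha>) i) 0 0"
    using assms unfolding rep_hom_def by auto
  moreover have "mmul (snd (Theta_obj N T \<alpha>') j i) (f j) (fst (Theta_obj N T \<alpha>') j) 0 0 =
      (if i \<in> supp N T \<alpha>' \<and> j \<in> supp N T \<alpha>' then f j 0 0 else 0)"
    by (simp add: mmul_def Theta_obj_def)
  moreover have "mmul (f i) (snd (Theta_obj N T \<alpha>) j i) (fst (Theta_obj N T \<alpha>) i) 0 0 =
      (if i \<in> supp N T \<alpha> \<and> j \<in> supp N T \<alpha> then f i 0 0 else 0)"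
    by (simp add: mmul_def Theta_obj_def)
  ultimately show ?thesis by simp
qed

context polygon_triangulation
begin

lemma supp_proj_iff_crossing_negs:
  assumes "in_strip N x y"
  shows "t \<in> supp N T (proj_diag N x y) \<longleftrightarrow> (\<exists>u v. (u, v) \<in> crossing_negs x y \<and> t = proj_diag N u v)"
proof
  assume "t \<in> supp N T (proj_diag N x y)"
  then obtain u v where "x < u" "u < y" "y < v" "v < x + int N" "t = proj_diag N u v" "t \<in> T"
    using supp_proj[OF assms] by blast
  then show "\<exists>u v. (u, v) \<in> crossing_negs x y \<and> t = proj_diag N u v"
    using crosses_if_between(1)[OF N_pos assms] unfolding crossing_negs_def neg_pt_def by blast
next
  assume "\<exists>u v. (u, v) \<in> crossing_negs x y \<and> t = proj_diag N u v"
  then show "t \<in> supp N T (proj_diag N x y)"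
    using neg_pt_in_supp[OF assms] unfolding crossing_negs_def by blast
qed

lemma crossing_negs_in_supp:
  "in_strip N x y \<Longrightarrow> c \<in> crossing_negs x y \<Longrightarrow> proj_pt N c \<in> supp N T (proj_diag N x y)"
  using supp_proj_iff_crossing_negs[of x y] unfolding proj_pt_def by (metis prod.collapse)

lemma nat_mod_ne_if_between:
  assumes "0 < y - x" "y - x < int N"
  shows "nat (x mod int N) \<noteq> nat (y mod int N)"
proof
  assume "nat (x mod int N) = nat (y mod int N)"
  then have "x mod int N = y mod int N" using N_pos by (simp add: eq_nat_nat_iff)
  from mod_eq_cases[OF this] assms N_pos show False by auto
qed

lemma arrow_common_first:
  assumes "x < p" "p < q" "q < x + int N" "proj_diag N x p \<in> T" "proj_diag N x q \<in> T" "tri_edge p q"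
  shows "arrow N T (proj_diag N x q) (proj_diag N x p)"
proof -
  have "cdist N (nat (x mod int N)) (nat (p mod int N)) = nat (p - x)"
    "cdist N (nat (x mod int N)) (nat (q mod int N)) = nat (q - x)"
    by (rule cdist_proj_eq[OF N_pos]; use assms in linarith)+
  then have "cdist N (nat (x mod int N)) (nat (p mod int N)) < cdist N (nat (x mod int N)) (nat (q mod int N))"
    using assms by simp
  moreover have "nat (p mod int N) \<noteq> nat (q mod int N)" using nat_mod_ne_if_between assms by auto
  ultimately show ?thesis
    unfolding arrow_def using assms(4-6) unfolding tri_edge_def proj_diag_def by blast
qed

lemma arrow_common_second:
  assumes "x < p" "p < q" "q < x + int N" "proj_diag N p q \<in> T" "proj_diag N x q \<in> T" "tri_edge x p"
  shows "arrow N T (proj_diag N p q) (proj_diag N x q)"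
proof -
  have "cdist N (nat (q mod int N)) (nat ((x + int N) mod int N)) = nat (x + int N - q)"
    "cdist N (nat (q mod int N)) (nat ((p + int N) mod int N)) = nat (p + int N - q)"
    by (rule cdist_proj_eq[OF N_pos]; use assms in linarith)+
  then have "cdist N (nat (q mod int N)) (nat (x mod int N)) < cdist N (nat (q mod int N)) (nat (p mod int N))"
    using assms by simp
  moreover have "nat (x mod int N) \<noteq> nat (p mod int N)" using nat_mod_ne_if_between assms by auto
  moreover have "proj_diag N x q = {nat (q mod int N), nat (x mod int N)}"
    "proj_diag N p q = {nat (q mod int N), nat (p mod int N)}"
    unfolding proj_diag_def by auto
  ultimately show ?thesis
    unfolding arrow_def using assms(4-6) unfolding tri_edge_def proj_diag_def by blast
qed

lemma proj_shared_not_in_supp: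
  assumes "in_strip N x y"
  shows "proj_diag N x z \<notin> supp N T (proj_diag N x y)" "proj_diag N z y \<notin> supp N T (proj_diag N x y)"
proof -
  have shared: "proj_diag N u v \<noteq> proj_diag N x z \<and> proj_diag N u v \<noteq> proj_diag N z y"
    if "x < u" "u < y" "y < v" "v < x + int N" for u v
  proof (intro conjI notI)
    assume "proj_diag N u v = proj_diag N x z"
    from proj_diag_eq_cases[OF N_pos this] that show False by (elim disjE conjE; linarith)
  next
    assume "proj_diag N u v = proj_diag N z y"
    from proj_diag_eq_cases[OF N_pos this] that assms show False
      unfolding in_strip_def by (elim disjE conjE; linarith)
  qed
  show "proj_diag N x z \<notin> supp N T (proj_diag N x y)"
  proof
    assume "proj_diag N x z \<in> supp N T (proj_diag N x y)"
    then obtain u v where "x < u" "u < y" "y < v" "v < x + int N" "proj_diag N x z = proj_diag N u v"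
      using supp_proj[OF assms] by blast
    then show False using shared by metis
  qed
  show "proj_diag N z y \<notin> supp N T (proj_diag N x y)"
  proof
    assume "proj_diag N z y \<in> supp N T (proj_diag N x y)"
    then obtain u v where "x < u" "u < y" "y < v" "v < x + int N" "proj_diag N z y = proj_diag N u v"
      using supp_proj[OF assms] by blast
    then show False using shared by metis
  qed
qed

lemma root_lift_crossing:
  assumes neg: "neg_pt u v" and supp: "proj_diag N u v \<in> supp N T \<alpha>'" and d: "diagonal N \<alpha>'"
  obtains x1 y1 where "in_strip N x1 y1" "\<alpha>' = proj_diag N x1 y1" "(u, v) \<in> crossing_negs x1 y1"
proof -
  have s: "in_strip N u v" using neg unfolding neg_pt_def by simp
  have "crosses N (proj_diag N u v) \<alpha>'" using supp unfolding supp_def by simp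
  moreover have "\<forall>z\<in>\<alpha>'. z < N" using d unfolding diagonal_def by auto
  ultimately obtain x y where xy: "u < x" "x < v" "v < y" "y < u + int N" "\<alpha>' = proj_diag N x y"
    using proj_crosses_iff[OF N_pos s] by blast
  have "\<alpha>' = proj_diag N (y - int N) x" using xy(5) proj_diag_swap_shift by simp
  moreover have "in_strip N (y - int N) x" using xy unfolding in_strip_def by auto
  moreover have "(u, v) \<in> crossing_negs (y - int N) x" using xy neg unfolding crossing_negs_def by auto
  ultimately show thesis using that by blast
qed

lemma pos_box_if_common_crossing:
  assumes "(u, v) \<in> crossing_negs x0 y0 \<inter> crossing_negs x1 y1" "x0 \<le> x1" "y0 \<le> y1"
  shows "pos_box (x0, y0) (x1, y1)"
  unfolding pos_box_def
proof (intro allI impI)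
  fix X Y assume "in_box (x0, y0) (x1, y1) X Y"
  moreover have "x0 < u" "u < y0" "y0 < v" "v < x0 + int N" "x1 < u" "u < y1" "y1 < v"
    "v < x1 + int N" "neg_pt u v"
    using assms(1) unfolding crossing_negs_def by auto
  ultimately have "in_strip N X Y" "\<not> neg_pt X Y"
    using neg_pts_noncrossing[of X Y u v] unfolding in_box_def in_strip_def by auto
  then show "pos_pt X Y" unfolding pos_pt_def neg_pt_def by simp
qed

lemma common_crossing_lifts_eq:
  assumes box: "pos_box (x, y) (x', y')" and le: "x \<le> x'" "y \<le> y'"
    and uv: "(u, v) \<in> crossing_negs x y" and uv': "(u', v') \<in> crossing_negs x' y'"
    and e: "proj_diag N u v = proj_diag N u' v'"
  shows "u = u' \<and> v = v'"
proof -
  have c: "2 \<le> y - x'" "y' - x \<le> int N - 2" using pos_box_corners[OF box le] by auto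
  have A: "x < u" "u < y" "y < v" "v < x + int N" "neg_pt u v"
    and B: "x' < u'" "u' < y'" "y' < v'" "v' < x' + int N"
    using uv uv' unfolding crossing_negs_def by auto
  from proj_diag_eq_cases[OF N_pos e] show ?thesis
  proof
    assume "(u = u' \<or> u + int N \<le> u' \<or> u' + int N \<le> u) \<and> (v = v' \<or> v + int N \<le> v' \<or> v' + int N \<le> v)"
    then show ?thesis using c le A B by (elim disjE conjE; linarith)
  next
    assume h: "(u = v' \<or> u + int N \<le> v' \<or> v' + int N \<le> u) \<and> (v = u' \<or> v + int N \<le> u' \<or> u' + int N \<le> v)"
    have "v = u'" "u < x'" using h c le A B by (elim disjE conjE; linarith)+
    then have "pos_pt u v" using box A B le unfolding pos_box_def in_box_def by auto
    then show ?thesis using A(5) unfolding pos_pt_def neg_pt_def by simp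
  qed
qed

end

locale theta_rep_hom = rooted_walks +
  fixes f :: "nat set \<Rightarrow> cmat" and x0 y0 :: int
  assumes P0_eq: "P0 = (x0, y0)" and pos_P0: "pos_pt x0 y0"
    and f_hom: "f \<in> rep_hom N T (Theta_obj N T \<alpha>) (Theta_obj N T \<alpha>')"
begin

lemma alpha_eq: "\<alpha> = proj_diag N x0 y0"
  using proj_P0 P0_eq unfolding proj_pt_def by simp

lemma in_strip_P0: "in_strip N x0 y0"
  using pos_P0 unfolding pos_pt_def by simp

lemma supp_alpha_iff: "t \<in> supp N T \<alpha> \<longleftrightarrow> (\<exists>u v. (u, v) \<in> crossing_negs x0 y0 \<and> t = proj_diag N u v)"
  unfolding alpha_eq using supp_proj_iff_crossing_negs[OF in_strip_P0] .

lemma f_eq_if_arrow: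
  assumes "arrow N T j i" "i \<in> supp N T \<alpha>" "j \<in> supp N T \<alpha>" "i \<in> supp N T \<alpha>'" "j \<in> supp N T \<alpha>'"
  shows "f j 0 0 = f i 0 0"
  using rep_hom_Theta_obj_arrow[OF f_hom assms(1)] assms(2-5) by simp

lemma f_zero_if_arrow_from_outside:
  assumes "arrow N T j i" "i \<in> supp N T \<alpha>" "j \<in> supp N T \<alpha>" "j \<notin> supp N T \<alpha>'"
  shows "f i 0 0 = 0"
  using rep_hom_Theta_obj_arrow[OF f_hom assms(1)] assms(2-4) by simp

lemma f_zero_if_arrow_to_outside:
  assumes "arrow N T j i" "i \<notin> supp N T \<alpha>" "i \<in> supp N T \<alpha>'" "j \<in> supp N T \<alpha>'"
  shows "f j 0 0 = 0"
  using rep_hom_Theta_obj_arrow[OF f_hom assms(1)] assms(2-4) by simp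

lemma f_eq_consec:
  assumes a: "(u, v) \<in> crossing_negs x0 y0" and b: "(u', v') \<in> crossing_negs x0 y0"
    and less: "stair_less (u, v) (u', v')"
    and consec: "\<forall>d\<in>crossing_negs x0 y0. \<not> (stair_less (u, v) d \<and> stair_less d (u', v'))"
    and supp': "proj_diag N u v \<in> supp N T \<alpha>'" "proj_diag N u' v' \<in> supp N T \<alpha>'"
  shows "f (proj_diag N u v) 0 0 = f (proj_diag N u' v') 0 0"
proof -
  have A: "x0 < u" "u < y0" "y0 < v" "v < x0 + int N" "neg_pt u v"
    and B: "x0 < u'" "u' < y0" "y0 < v'" "v' < x0 + int N" "neg_pt u' v'"
    using a b unfolding crossing_negs_def by auto
  have supp: "proj_diag N u v \<in> supp N T \<alpha>" "proj_diag N u' v' \<in> supp N T \<alpha>"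
    using a b supp_alpha_iff by blast+
  from stair_consec_tri_edge[OF a b less consec] show ?thesis
  proof (elim disjE conjE)
    assume "u = u'" "v' < v" "tri_edge v' v"
    then have "arrow N T (proj_diag N u v) (proj_diag N u v')"
      using arrow_common_first[of u v' v] A B unfolding neg_pt_def by auto
    then show ?thesis using f_eq_if_arrow supp supp' \<open>u = u'\<close> by simp
  next
    assume "v = v'" "u < u'" "tri_edge u u'"
    then have "arrow N T (proj_diag N u' v) (proj_diag N u v)"
      using arrow_common_second[of u u' v] A B unfolding neg_pt_def by auto
    then show ?thesis using f_eq_if_arrow supp supp' \<open>v = v'\<close> by simp
  qed
qed

lemma f_const_on_common_crossings:
  assumes s1: "in_strip N x1 y1" and a': "\<alpha>' = proj_diag N x1 y1"
    and c: "c \<in> crossing_negs x0 y0 \<inter> crossing_negs x1 y1" "c' \<in> crossing_negs x0 y0 \<inter> crossing_negs x1 y1"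
  shows "f (proj_pt N c) 0 0 = f (proj_pt N c') 0 0"
proof (rule stair_const_on_convex[OF finite_crossing_negs _ _ _ c])
  fix a b d
  assume "a \<in> crossing_negs x0 y0 \<inter> crossing_negs x1 y1" "d \<in> crossing_negs x0 y0 \<inter> crossing_negs x1 y1"
    "b \<in> crossing_negs x0 y0" "stair_less a b" "stair_less b d"
  then show "b \<in> crossing_negs x0 y0 \<inter> crossing_negs x1 y1"
    using stair_less_crossing_negs[of a x0 y0 b] stair_less_crossing_negs[of b x0 y0 d]
    unfolding crossing_negs_def by auto
next
  fix a b
  assume "a \<in> crossing_negs x0 y0 \<inter> crossing_negs x1 y1" "b \<in> crossing_negs x0 y0 \<inter> crossing_negs x1 y1"
    "stair_less a b" "\<forall>d\<in>crossing_negs x0 y0. \<not> (stair_less a d \<and> stair_less d b)"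
  moreover have "proj_pt N a \<in> supp N T \<alpha>'" "proj_pt N b \<in> supp N T \<alpha>'"
    using calculation(1,2) crossing_negs_in_supp[OF s1] a' by auto
  ultimately show "f (proj_pt N a) 0 0 = f (proj_pt N b) 0 0"
    using f_eq_consec[of "fst a" "snd a" "fst b" "snd b"] unfolding proj_pt_def by auto
qed simp


(* At an end of the stretch of the zigzag crossing both roots, an arrow of Q_T joins a T-diagonal
   in both supports to one outside one of them, which forces f to vanish there. *)
lemma f_zero_at_first_crossing:
  assumes s1: "in_strip N x1 y1" and a': "\<alpha>' = proj_diag N x1 y1" and "x1 < x0"
    and first: "stair_min (crossing_negs x0 y0) (p, q)" and pq1: "(p, q) \<in> crossing_negs x1 y1"
  shows "f (proj_diag N p q) 0 0 = 0"
proof -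
  have pq0: "(p, q) \<in> crossing_negs x0 y0" using first unfolding stair_min_def by simp
  then have pq: "x0 < p" "p < y0" "y0 < q" "q < x0 + int N" "x1 < p" "p < y1" "y1 < q" "q < x1 + int N"
    "neg_pt p q" using pq1 unfolding crossing_negs_def by auto
  have tri: "tri_edge x0 p" "tri_edge x0 q" using stair_min_tri_edges[OF pos_P0 first] by auto
  have "in_strip N x0 q" using pq \<open>x1 < x0\<close> unfolding in_strip_def by auto
  then have "neg_pt x0 q"
    using tri(2) not_border_edge_proj[OF N_pos] unfolding tri_edge_def neg_pt_def by blast
  then have "proj_diag N x0 q \<in> supp N T \<alpha>'"
    using neg_pt_in_supp[OF s1, of x0 q] pq \<open>x1 < x0\<close> a' by auto
  moreover have "arrow N T (proj_diag N p q) (proj_diag N x0 q)"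
    using arrow_common_second[of x0 p q] pq tri(1) \<open>neg_pt x0 q\<close> unfolding neg_pt_def by auto
  moreover have "proj_diag N p q \<in> supp N T \<alpha>'"
    using crossing_negs_in_supp[OF s1 pq1] a' unfolding proj_pt_def by simp
  ultimately show ?thesis
    using f_zero_if_arrow_to_outside proj_shared_not_in_supp(1)[OF in_strip_P0] alpha_eq by metis
qed

lemma f_zero_after_leaving_left:
  assumes s1: "in_strip N x1 y1" and a': "\<alpha>' = proj_diag N x1 y1" and "x1 < x0"
    and pq0: "(p, q) \<in> crossing_negs x0 y0" and pq1: "(p, q) \<in> crossing_negs x1 y1"
    and b: "(u, v) \<in> crossing_negs x0 y0" "(u, v) \<notin> crossing_negs x1 y1" "stair_less (u, v) (p, q)"
    and consec: "\<forall>d\<in>crossing_negs x0 y0. \<not> (stair_less (u, v) d \<and> stair_less d (p, q))"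
  shows "f (proj_diag N p q) 0 0 = 0"
proof -
  have pq: "x0 < p" "p < y0" "y0 < q" "q < x0 + int N" "x1 < p" "p < y1" "y1 < q" "q < x1 + int N"
    "neg_pt p q" using pq0 pq1 unfolding crossing_negs_def by auto
  have le: "u \<le> p" "q \<le> v" using stair_less_crossing_negs[OF b(1) pq0 b(3)] by auto
  then have v: "x1 + int N \<le> v" using b(1,2) pq \<open>x1 < x0\<close> unfolding crossing_negs_def by auto
  then have "u = p" "tri_edge q v" using stair_consec_tri_edge[OF b(1) pq0 b(3) consec] pq by auto
  have B: "v < x0 + int N" "neg_pt p v" using b(1) \<open>u = p\<close> unfolding crossing_negs_def by auto
  have "proj_diag N p v \<notin> supp N T \<alpha>'"
  proof
    assume "proj_diag N p v \<in> supp N T \<alpha>'"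
    then obtain u' v' where uv': "x1 < u'" "u' < y1" "y1 < v'" "v' < x1 + int N"
        "proj_diag N p v = proj_diag N u' v'"
      using supp_proj[OF s1] a' by blast
    from proj_diag_eq_cases[OF N_pos uv'(5)] show False
      using uv' pq v B le \<open>x1 < x0\<close> by (elim disjE conjE; linarith)
  qed
  moreover have "arrow N T (proj_diag N p v) (proj_diag N p q)"
    using arrow_common_first[of p q v] pq B v \<open>tri_edge q v\<close> unfolding neg_pt_def by auto
  moreover have "proj_diag N p v \<in> supp N T \<alpha>" "proj_diag N p q \<in> supp N T \<alpha>"
    using b(1) pq0 \<open>u = p\<close> supp_alpha_iff by blast+
  ultimately show ?thesis using f_zero_if_arrow_from_outside by blast
qed

lemma f_nonzero_common_crossing_left:
  assumes s1: "in_strip N x1 y1" and a': "\<alpha>' = proj_diag N x1 y1"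
    and t0: "t0 \<in> crossing_negs x0 y0 \<inter> crossing_negs x1 y1" and nz: "f (proj_pt N t0) 0 0 \<noteq> 0"
  shows "x0 \<le> x1"
proof (rule ccontr)
  assume "\<not> x0 \<le> x1"
  let ?S = "crossing_negs x0 y0" and ?K = "crossing_negs x0 y0 \<inter> crossing_negs x1 y1"
  obtain p q where m: "stair_min ?K (p, q)"
    using stair_min_exists[of ?K] t0 finite_crossing_negs by (metis empty_iff finite_Int surj_pair)
  then have pqK: "(p, q) \<in> ?K" unfolding stair_min_def by simp
  have nz': "f (proj_diag N p q) 0 0 \<noteq> 0"
    using f_const_on_common_crossings[OF s1 a' pqK t0] nz unfolding proj_pt_def by simp
  show False
  proof (cases "\<exists>c\<in>?S. stair_less c (p, q)")
    case False
    then have "stair_min ?S (p, q)" using pqK stair_less_total unfolding stair_min_def by blast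
    then show False using f_zero_at_first_crossing[OF s1 a'] pqK nz' \<open>\<not> x0 \<le> x1\<close> by simp
  next
    case True
    then obtain b where b: "b \<in> ?S" "stair_less b (p, q)" "\<forall>d\<in>?S. \<not> (stair_less b d \<and> stair_less d (p, q))"
      using stair_pred_exists[OF finite_crossing_negs] by metis
    moreover have "b \<notin> ?K" using stair_min_le[OF m] b(2) by blast
    ultimately show False using f_zero_after_leaving_left[OF s1 a', of p q "fst b" "snd b"]
      pqK nz' \<open>\<not> x0 \<le> x1\<close> by simp
  qed
qed

lemma f_zero_at_last_crossing:
  assumes s1: "in_strip N x1 y1" and a': "\<alpha>' = proj_diag N x1 y1" and "x0 \<le> x1" "y1 < y0"
    and last: "stair_max (crossing_negs x0 y0) (p, q)" and pq1: "(p, q) \<in> crossing_negs x1 y1"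
  shows "f (proj_diag N p q) 0 0 = 0"
proof -
  have pq0: "(p, q) \<in> crossing_negs x0 y0" using last unfolding stair_max_def by simp
  then have pq: "x0 < p" "p < y0" "y0 < q" "q < x0 + int N" "x1 < p" "p < y1" "y1 < q" "q < x1 + int N"
    "neg_pt p q" using pq1 unfolding crossing_negs_def by auto
  have s0: "2 \<le> y0 - x0" "y0 - x0 \<le> int N - 2" using in_strip_P0 unfolding in_strip_def by auto
  have tri: "tri_edge p y0" "tri_edge y0 q" using stair_max_tri_edges[OF pos_P0 last] by auto
  have "in_strip N p y0" using pq s0 \<open>y1 < y0\<close> unfolding in_strip_def by auto
  then have "neg_pt p y0"
    using tri(1) not_border_edge_proj[OF N_pos] unfolding tri_edge_def neg_pt_def by blast
  then have "proj_diag N p y0 \<in> supp N T \<alpha>'"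
    using neg_pt_in_supp[OF s1, of p y0] pq s0 \<open>x0 \<le> x1\<close> \<open>y1 < y0\<close> a' by auto
  moreover have "arrow N T (proj_diag N p q) (proj_diag N p y0)"
    using arrow_common_first[of p y0 q] pq tri(2) \<open>neg_pt p y0\<close> unfolding neg_pt_def by auto
  moreover have "proj_diag N p q \<in> supp N T \<alpha>'"
    using crossing_negs_in_supp[OF s1 pq1] a' unfolding proj_pt_def by simp
  ultimately show ?thesis
    using f_zero_if_arrow_to_outside proj_shared_not_in_supp(2)[OF in_strip_P0] alpha_eq by metis
qed

lemma f_zero_before_leaving_below:
  assumes s1: "in_strip N x1 y1" and a': "\<alpha>' = proj_diag N x1 y1" and "x0 \<le> x1" "y1 < y0"
    and pq0: "(p, q) \<in> crossing_negs x0 y0" and pq1: "(p, q) \<in> crossing_negs x1 y1"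
    and b: "(u, v) \<in> crossing_negs x0 y0" "(u, v) \<notin> crossing_negs x1 y1" "stair_less (p, q) (u, v)"
    and consec: "\<forall>d\<in>crossing_negs x0 y0. \<not> (stair_less (p, q) d \<and> stair_less d (u, v))"
  shows "f (proj_diag N p q) 0 0 = 0"
proof -
  have pq: "x0 < p" "p < y0" "y0 < q" "q < x0 + int N" "x1 < p" "p < y1" "y1 < q" "q < x1 + int N"
    "neg_pt p q" using pq0 pq1 unfolding crossing_negs_def by auto
  have s0: "2 \<le> y0 - x0" "y0 - x0 \<le> int N - 2" using in_strip_P0 unfolding in_strip_def by auto
  have le: "p \<le> u" "v \<le> q" using stair_less_crossing_negs[OF pq0 b(1) b(3)] by auto
  then have u: "y1 \<le> u" using b(1,2) pq \<open>y1 < y0\<close> unfolding crossing_negs_def by auto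
  then have "v = q" "tri_edge p u" using stair_consec_tri_edge[OF pq0 b(1) b(3) consec] pq by auto
  have B: "u < y0" "neg_pt u q" using b(1) \<open>v = q\<close> unfolding crossing_negs_def by auto
  have "proj_diag N u q \<notin> supp N T \<alpha>'"
  proof
    assume "proj_diag N u q \<in> supp N T \<alpha>'"
    then obtain u' v' where uv': "x1 < u'" "u' < y1" "y1 < v'" "v' < x1 + int N"
        "proj_diag N u q = proj_diag N u' v'"
      using supp_proj[OF s1] a' by blast
    from proj_diag_eq_cases[OF N_pos uv'(5)] show False
      using uv' pq u B le s0 \<open>x0 \<le> x1\<close> \<open>y1 < y0\<close> by (elim disjE conjE; linarith)
  qed
  moreover have "arrow N T (proj_diag N u q) (proj_diag N p q)"
    using arrow_common_second[of p u q] pq B u \<open>tri_edge p u\<close> unfolding neg_pt_def by auto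
  moreover have "proj_diag N u q \<in> supp N T \<alpha>" "proj_diag N p q \<in> supp N T \<alpha>"
    using b(1) pq0 \<open>v = q\<close> supp_alpha_iff by blast+
  ultimately show ?thesis using f_zero_if_arrow_from_outside by blast
qed

lemma f_nonzero_common_crossing_below:
  assumes s1: "in_strip N x1 y1" and a': "\<alpha>' = proj_diag N x1 y1" and x01: "x0 \<le> x1"
    and t0: "t0 \<in> crossing_negs x0 y0 \<inter> crossing_negs x1 y1" and nz: "f (proj_pt N t0) 0 0 \<noteq> 0"
  shows "y0 \<le> y1"
proof (rule ccontr)
  assume "\<not> y0 \<le> y1"
  let ?S = "crossing_negs x0 y0" and ?K = "crossing_negs x0 y0 \<inter> crossing_negs x1 y1"
  obtain p q where m: "stair_max ?K (p, q)"
    using stair_max_exists[of ?K] t0 finite_crossing_negs by (metis empty_iff finite_Int surj_pair)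
  then have pqK: "(p, q) \<in> ?K" unfolding stair_max_def by simp
  have nz': "f (proj_diag N p q) 0 0 \<noteq> 0"
    using f_const_on_common_crossings[OF s1 a' pqK t0] nz unfolding proj_pt_def by simp
  show False
  proof (cases "\<exists>c\<in>?S. stair_less (p, q) c")
    case False
    then have "stair_max ?S (p, q)" using pqK stair_less_total unfolding stair_max_def by blast
    then show False using f_zero_at_last_crossing[OF s1 a' x01] pqK nz' \<open>\<not> y0 \<le> y1\<close> by simp
  next
    case True
    then obtain b where b: "b \<in> ?S" "stair_less (p, q) b" "\<forall>d\<in>?S. \<not> (stair_less (p, q) d \<and> stair_less d b)"
      using stair_succ_exists[OF finite_crossing_negs] by metis
    moreover have "b \<notin> ?K" using stair_max_ge[OF m] b(2) by blast
    ultimately show False using f_zero_before_leaving_below[OF s1 a' x01, of p q "fst b" "snd b"]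
      pqK nz' \<open>\<not> y0 \<le> y1\<close> by simp
  qed
qed

lemma f_nonzero_common_crossing_le:
  assumes "in_strip N x1 y1" "\<alpha>' = proj_diag N x1 y1"
    "t0 \<in> crossing_negs x0 y0 \<inter> crossing_negs x1 y1" "f (proj_pt N t0) 0 0 \<noteq> 0"
  shows "x0 \<le> x1" "y0 \<le> y1"
  using f_nonzero_common_crossing_left[OF assms] f_nonzero_common_crossing_below[OF assms(1,2) _ assms(3,4)]
  by auto


lemma f_support_lift:
  assumes d: "diagonal N \<alpha>'" and nz: "f i 0 0 \<noteq> 0"
  obtains u v x1 y1 where "(u, v) \<in> crossing_negs x0 y0 \<inter> crossing_negs x1 y1" "i = proj_diag N u v"
    "in_strip N x1 y1" "\<alpha>' = proj_diag N x1 y1" "x0 \<le> x1" "y0 \<le> y1" "pos_box P0 (x1, y1)"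
proof -
  have "i \<in> supp N T \<alpha>" "i \<in> supp N T \<alpha>'" using rep_hom_Theta_obj_support[OF f_hom nz] by auto
  then obtain u v where uv: "(u, v) \<in> crossing_negs x0 y0" "i = proj_diag N u v"
    using supp_alpha_iff by blast
  then obtain x1 y1 where l: "in_strip N x1 y1" "\<alpha>' = proj_diag N x1 y1" "(u, v) \<in> crossing_negs x1 y1"
    using root_lift_crossing[OF _ _ d] \<open>i \<in> supp N T \<alpha>'\<close> unfolding crossing_negs_def by blast
  then have K: "(u, v) \<in> crossing_negs x0 y0 \<inter> crossing_negs x1 y1" using uv by simp
  then have "x0 \<le> x1" "y0 \<le> y1"
    using f_nonzero_common_crossing_le[OF l(1,2) K] nz uv(2) unfolding proj_pt_def by auto
  then show thesis using that K uv l pos_box_if_common_crossing[OF K] P0_eq by blast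
qed

lemma f_eq_Theta_path:
  assumes d: "diagonal N \<alpha>'" and K: "(u, v) \<in> crossing_negs x0 y0 \<inter> crossing_negs x1 y1"
    and s1: "in_strip N x1 y1" and a': "\<alpha>' = proj_diag N x1 y1" and le: "x0 \<le> x1" "y0 \<le> y1"
    and box: "pos_box P0 (x1, y1)" and w: "walk_end P0 w = (x1, y1)"
  shows "f i 0 0 = f (proj_diag N u v) 0 0 *
    (if \<forall>\<beta>\<in>set (walk_path P0 w). i \<in> supp N T \<beta> then 1 else 0)"
proof (cases "\<forall>\<beta>\<in>set (walk_path P0 w). i \<in> supp N T \<beta>")
  case True
  have "proj_pt N P0 \<in> set (walk_path P0 w)" "proj_pt N (x1, y1) \<in> set (walk_path P0 w)"
    using hd_walk_path[of P0 w] last_walk_path[of P0 w] w walk_path_ne by (metis hd_in_set last_in_set)+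
  then have "i \<in> supp N T \<alpha>" "i \<in> supp N T \<alpha>'" using True proj_P0 a' unfolding proj_pt_def by auto
  obtain ui vi where i0: "(ui, vi) \<in> crossing_negs x0 y0" "i = proj_diag N ui vi"
    using \<open>i \<in> supp N T \<alpha>\<close> supp_alpha_iff by blast
  obtain ui' vi' where i1: "(ui', vi') \<in> crossing_negs x1 y1" "i = proj_diag N ui' vi'"
    using \<open>i \<in> supp N T \<alpha>'\<close> supp_proj_iff_crossing_negs[OF s1] a' by blast
  have "ui = ui' \<and> vi = vi'"
    using common_crossing_lifts_eq[OF _ le i0(1) i1(1)] box P0_eq i0(2) i1(2) by simp
  then have "(ui, vi) \<in> crossing_negs x0 y0 \<inter> crossing_negs x1 y1" using i0 i1 by simp
  from f_const_on_common_crossings[OF s1 a' this K] show ?thesis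
    using True i0(2) unfolding proj_pt_def by simp
next
  case False
  have "f i 0 0 = 0"
  proof (rule ccontr)
    assume "f i 0 0 \<noteq> 0"
    then obtain ui vi x2 y2 where i: "(ui, vi) \<in> crossing_negs x0 y0 \<inter> crossing_negs x2 y2"
        "i = proj_diag N ui vi" "\<alpha>' = proj_diag N x2 y2" "x0 \<le> x2" "y0 \<le> y2" "pos_box P0 (x2, y2)"
      using f_support_lift[OF d] by metis
    have "(x2, y2) = (x1, y1)"
      using pos_box_end_unique[of "(x2, y2)" "(x1, y1)" P0] box i le a' P0_eq
      unfolding proj_pt_def by simp
    then have "\<forall>\<beta>\<in>set (walk_path P0 w). i \<in> supp N T \<beta>"
      using walk_path_supp_if_crossing[of P0 w _ ui vi] box w i(1,2) P0_eq
      unfolding crossing_negs_def by auto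
    then show False using False by blast
  qed
  then show ?thesis using False by (subst if_not_P) auto
qed

lemma Theta_lin_eq_rep_hom:
  assumes d: "diagonal N \<alpha>'" and K: "(u, v) \<in> crossing_negs x0 y0 \<inter> crossing_negs x1 y1"
    and s1: "in_strip N x1 y1" and a': "\<alpha>' = proj_diag N x1 y1" and le: "x0 \<le> x1" "y0 \<le> y1"
    and box: "pos_box P0 (x1, y1)" and w: "walk_end P0 w = (x1, y1)"
  shows "Theta_lin N T (\<lambda>p. f (proj_diag N u v) 0 0 * path_vec (walk_path P0 w) p) = f"
  unfolding Theta_lin_scale_path_vec
proof (intro ext)
  fix i r s
  show "f (proj_diag N u v) 0 0 * Theta_path N T (walk_path P0 w) i r s = f i r s"
  proof (cases "r = 0 \<and> s = 0")
    case True
    then show ?thesis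
      using f_eq_Theta_path[OF assms, of i] by (simp add: Theta_path_eq[OF walk_path_ne])
  next
    case False
    then show ?thesis
      using rep_hom_Theta_obj_support[OF f_hom, of i r s] by (auto simp: Theta_path_eq[OF walk_path_ne])
  qed
qed

lemma Theta_full:
  assumes "pos_root N T \<alpha>'"
  shows "\<exists>c\<in>free_hom N T \<alpha> \<alpha>'. Theta_lin N T c = f"
proof (cases "\<forall>i r s. f i r s = 0")
  case True
  have "(\<lambda>_. 0) \<in> free_hom N T \<alpha> \<alpha>'" unfolding free_hom_def by simp
  moreover have "Theta_lin N T (\<lambda>_. 0) = f" using True unfolding Theta_lin_def by (auto intro!: ext)
  ultimately show ?thesis by blast
next
  case False
  have d: "diagonal N \<alpha>'" using assms unfolding pos_root_def by simp
  obtain t r s where "f t r s \<noteq> 0" using False by blast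
  then have "f t 0 0 \<noteq> 0" using rep_hom_Theta_obj_support[OF f_hom] by blast
  then obtain u v x1 y1 where K: "(u, v) \<in> crossing_negs x0 y0 \<inter> crossing_negs x1 y1"
    and l: "in_strip N x1 y1" "\<alpha>' = proj_diag N x1 y1" "x0 \<le> x1" "y0 \<le> y1" "pos_box P0 (x1, y1)"
    using f_support_lift[OF d] by metis
  define w where "w = replicate (nat (x1 - x0)) True @ replicate (nat (y1 - y0)) False"
  have w_end: "walk_end P0 w = (x1, y1)" unfolding w_def walk_end_eq P0_eq using l(3,4) by simp
  then have "pos_walk P0 w" using pos_walk_if_pos_box l(5) by simp
  then have "piv_path N T (walk_path P0 w) \<and> hd (walk_path P0 w) = \<alpha> \<and> last (walk_path P0 w) = \<alpha>'"
    using piv_path_walk_path hd_walk_path last_walk_path proj_P0 w_end l(2) by (simp add: proj_pt_def)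
  then have "(\<lambda>p. f (proj_diag N u v) 0 0 * path_vec (walk_path P0 w) p) \<in> free_hom N T \<alpha> \<alpha>'"
    unfolding free_hom_def path_vec_def by (auto intro: finite_subset[of _ "{walk_path P0 w}"])
  then show ?thesis using Theta_lin_eq_rep_hom[OF d K l(1-5) w_end] by blast
qed

end

theorem mainTheorem3:
  fixes n :: nat and T :: "nat set set" and \<alpha> \<alpha>' :: "nat set"
  assumes "triangulation (n + 3) T"
    and "pos_root (n + 3) T \<alpha>" and "pos_root (n + 3) T \<alpha>'"
  shows "(\<forall>f \<in> rep_hom (n + 3) T (Theta_obj (n + 3) T \<alpha>) (Theta_obj (n + 3) T \<alpha>').
            \<exists>c \<in> free_hom (n + 3) T \<alpha> \<alpha>'. Theta_lin (n + 3) T c = f)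
       \<and> (\<forall>c \<in> free_hom (n + 3) T \<alpha> \<alpha>'.
            Theta_lin (n + 3) T c = (\<lambda>i r s. 0) \<longrightarrow> c \<in> mesh_span (n + 3) T \<alpha> \<alpha>')"
proof -
  interpret polygon_triangulation "n + 3" T
    using assms(1) by unfold_locales auto
  obtain x0 y0 where xy: "in_strip (n + 3) x0 y0" "\<alpha> = proj_diag (n + 3) x0 y0"
    using diagonal_lift[OF N_pos] assms(2) unfolding pos_root_def by metis
  then have pos: "pos_pt x0 y0" using assms(2) unfolding pos_pt_def pos_root_def by simp
  interpret rooted_walks "n + 3" T "(x0, y0)" \<alpha> \<alpha>'
    by unfold_locales (simp add: proj_pt_def xy)
  have "\<exists>c \<in> free_hom (n + 3) T \<alpha> \<alpha>'. Theta_lin (n + 3) T c = f"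
    if "f \<in> rep_hom (n + 3) T (Theta_obj (n + 3) T \<alpha>) (Theta_obj (n + 3) T \<alpha>')" for f
  proof -
    interpret theta_rep_hom "n + 3" T "(x0, y0)" \<alpha> \<alpha>' f x0 y0
      by unfold_locales (use pos that in auto)
    show ?thesis using Theta_full assms(3) .
  qed
  then show ?thesis using Theta_faithful pos by auto
qed

end
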